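(* Let $k\ge2$, $n\ge1$ be integers and let $\rho:[0,\infty)\to(0,\infty)$ be a non-increasing function with $\int_{\mathbb{R}}\rho^{1/k}(t^2)\,dt<\infty$. Let $f_1,\dots,f_k:\mathbb{R}^n\to[0,\infty)$ be measurable, unconditional, integrable functions satisfying $$\prod_{i=1}^kf_i(x_i)\le\rho\Bigl(\sum_{1\le i<j\le k}\langle x_i,x_j\rangle\Bigr)\quad\text{for all }x_1,\dots,x_k\in\mathbb{R}^n_+ .$$ Then $$\prod_{i=1}^k\int_{\mathbb{R}^n}f_i(x_i)\,dx_i\le\Bigl(\int_{\mathbb{R}^n}\rho^{1/k}\Bigl(\frac{k(k-1)}{2}|u|^2\Bigr)du\Bigr)^k .$$ In particular, if $\alpha\ge0$ and $\prod_{i=1}^kf_i(x_i)\le e^{-\alpha\sum_{1\le i<j\le k}\langle x_i,x_j\rangle}$ for all $x_1,\dots,x_k\in\mathbb{R}^n_+$, then $$\prod_{i=1}^k\int_{\mathbb{R}^n}f_i(x_i)\,dx_i\le\Bigl(\int_{\mathbb{R}^n}e^{-\alpha\frac{k-1}{2}|u|^2}du\Bigr)^k$$ (the right-hand side being $+\infty$ if $\alpha=0$).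
   Context: A function $f:\mathbb{R}^n\to\mathbb{R}$ is unconditional if $f(\varepsilon_1x_1,\dots,\varepsilon_nx_n)=f(x_1,\dots,x_n)$ for all $(\varepsilon_1,\dots,\varepsilon_n)\in\{-1,1\}^n$ and all $(x_1,\dots,x_n)\in\mathbb{R}^n$. $\mathbb{R}^n_+=[0,\infty)^n$ is the nonnegative orthant, $|\cdot|$ the Euclidean norm and $\langle\cdot,\cdot\rangle$ the standard inner product. *)

theory Defs
  imports "HOL-Analysis.Analysis"
begin

definition unconditional :: "(real ^ 'n \<Rightarrow> real) \<Rightarrow> bool" where
  "unconditional f \<longleftrightarrow>
     (\<forall>\<epsilon> :: 'n \<Rightarrow> real. \<forall>x :: real ^ 'n. (\<forall>j. \<epsilon> j \<in> {-1, 1}) \<longrightarrow>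
        f (\<chi> j. \<epsilon> j * x $ j) = f x)"

definition nonneg_orthant :: "(real ^ 'n) set" where
  "nonneg_orthant = {x. \<forall>j. 0 \<le> x $ j}"

text \<open>Sum over 1 <= i < j <= k of inner products (indices 0..k-1 here).\<close>
definition pair_inner_sum :: "nat \<Rightarrow> (nat \<Rightarrow> real ^ 'n) \<Rightarrow> real" where
  "pair_inner_sum k x = (\<Sum>j<k. \<Sum>i<j. x i \<bullet> x j)"

end

theory Submission
  imports Defs
begin

text \<open>By unconditionality, the integral of each \<open>f i\<close> is at most \<open>2^n\<close> times its integral over
  the closed orthant, while the radial function \<open>h u = \<rho> (k (k - 1) / 2 * |u|^2) powr (1 / k)\<close> integrates to
  at least \<open>2^n\<close> times its integral over the open orthant; so it suffices to compare orthant
  integrals. If \<open>x 1, ..., x k\<close> lie in the open orthant and \<open>g\<close> is their coordinatewise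
  geometric mean, AM--GM over the pairs gives \<open>k (k - 1) / 2 * |g|^2 \<le> \<Sum>i<j. x i \<bullet> x j\<close>, so
  \<open>\<Prod>i. f i (x i) \<le> h g ^ k\<close> because \<open>\<rho>\<close> is non-increasing. This is the hypothesis of the
  multiplicative Prekopa--Leindler inequality on the orthant, which is proved one coordinate at
  a time; in one variable the substitution \<open>t = exp s\<close> turns it into the additive
  Prekopa--Leindler inequality, which follows from the one-dimensional Brunn--Minkowski
  inequality by the layer-cake formula and AM--GM.
  The Gaussian bound is the case \<open>\<rho> t = exp (- \<alpha> * t)\<close>, its right-hand side being infinite
  for \<open>\<alpha> = 0\<close>.\<close>

section \<open>The Brunn--Minkowski inequality on the real line\<close>

lemma emeasure_lborel_translation:
  fixes A :: "real set"
  assumes "A \<in> sets borel"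
  shows "emeasure lborel ((\<lambda>x. x + c) ` A) = emeasure lborel A"
proof -
  have image_eq: "(\<lambda>x. x + c) ` A = (\<lambda>x. x - c) -` A"
    by (auto simp: image_iff) (metis diff_add_cancel)
  have "(\<lambda>x::real. x - c) \<in> borel \<rightarrow>\<^sub>M borel"
    by measurable
  from measurable_sets_borel[OF this assms] have "(\<lambda>x. x + c) ` A \<in> sets borel"
    unfolding image_eq .
  then have "emeasure lborel ((\<lambda>x. x + c) ` A) = emeasure (distr lborel borel ((+) c)) ((\<lambda>x. x + c) ` A)"
    by (simp add: lborel_distr_plus)
  also have "\<dots> = emeasure lborel ((+) c -` ((\<lambda>x. x + c) ` A))"
    using \<open>(\<lambda>x. x + c) ` A \<in> sets borel\<close> by (simp add: emeasure_distr)
  also have "(+) c -` ((\<lambda>x. x + c) ` A) = A"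
    by (auto simp: add.commute)
  finally show ?thesis .
qed

text \<open>Translating \<open>K\<close> by \<open>min L\<close> and \<open>L\<close> by \<open>max K\<close> gives two subsets of \<open>K + L\<close>
  that overlap only in the point \<open>max K + min L\<close>.\<close>

lemma emeasure_lborel_sums_compact:
  fixes K L :: "real set"
  assumes K: "compact K" "K \<noteq> {}" and L: "compact L" "L \<noteq> {}"
  shows "emeasure lborel K + emeasure lborel L \<le> emeasure lborel {x + y | x y. x \<in> K \<and> y \<in> L}"
proof -
  define a where "a = Sup K"
  define b where "b = Inf L"
  have a: "a \<in> K" "\<And>x. x \<in> K \<Longrightarrow> x \<le> a"
    unfolding a_def using K
    by (meson bounded_imp_bdd_above cSup_upper closed_contains_Sup compact_imp_bounded
        compact_imp_closed)+
  have b: "b \<in> L" "\<And>y. y \<in> L \<Longrightarrow> b \<le> y"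
    unfolding b_def using L
    by (meson bounded_imp_bdd_below cInf_lower closed_contains_Inf compact_imp_bounded
        compact_imp_closed)+
  define P where "P = (\<lambda>x. x + b) ` K"
  define Q where "Q = (\<lambda>y. y + a) ` L"
  have [measurable]: "K \<in> sets borel" "L \<in> sets borel"
    using K L by (auto intro: borel_closed compact_imp_closed)
  have [measurable]: "P \<in> sets borel" "Q \<in> sets borel"
    using K L unfolding P_def Q_def
    by (intro borel_closed compact_imp_closed compact_continuous_image continuous_intros; simp)+
  have "P \<inter> Q \<subseteq> {a + b}"
    using a(2) b(2) by (force simp: P_def Q_def)
  moreover have "{a + b} \<in> null_sets lborel" "P \<inter> Q \<in> sets lborel"
    by (simp_all add: null_sets_def)
  ultimately have "P \<inter> Q \<in> null_sets lborel"
    using null_sets_subset by blast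
  then have "emeasure lborel (P \<union> Q) = emeasure lborel P + emeasure lborel Q"
    by (intro emeasure_Un') simp_all
  then have "emeasure lborel K + emeasure lborel L = emeasure lborel (P \<union> Q)"
    by (simp add: P_def Q_def emeasure_lborel_translation)
  also have "\<dots> \<le> emeasure lborel {x + y | x y. x \<in> K \<and> y \<in> L}"
  proof (rule emeasure_mono)
    show "P \<union> Q \<subseteq> {x + y | x y. x \<in> K \<and> y \<in> L}"
      using a(1) b(1) unfolding P_def Q_def by (blast intro: add.commute)
    show "{x + y | x y. x \<in> K \<and> y \<in> L} \<in> sets lborel"
      using K L by (simp add: borel_closed compact_imp_closed compact_sums)
  qed
  finally show ?thesis .
qed

definition minkowski_sum :: "nat \<Rightarrow> (nat \<Rightarrow> 'a::comm_monoid_add set) \<Rightarrow> 'a set" where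
  "minkowski_sum k K = {(\<Sum>i<k. t i) | t. \<forall>i<k. t i \<in> K i}"

lemma minkowski_sum_0 [simp]: "minkowski_sum 0 K = {0}"
  by (auto simp: minkowski_sum_def)

lemma minkowski_sum_Suc:
  "minkowski_sum (Suc k) K = {x + y | x y. x \<in> minkowski_sum k K \<and> y \<in> K k}"
proof safe
  fix z assume "z \<in> minkowski_sum (Suc k) K"
  then obtain t where "\<forall>i<Suc k. t i \<in> K i" "z = (\<Sum>i<Suc k. t i)"
    by (auto simp: minkowski_sum_def)
  then show "\<exists>x y. z = x + y \<and> x \<in> minkowski_sum k K \<and> y \<in> K k"
    by (intro exI[of _ "\<Sum>i<k. t i"] exI[of _ "t k"]) (auto simp: minkowski_sum_def)
next
  fix x y assume "x \<in> minkowski_sum k K" "y \<in> K k"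
  then obtain t where t: "\<forall>i<k. t i \<in> K i" "x = (\<Sum>i<k. t i)"
    by (auto simp: minkowski_sum_def)
  have "(\<Sum>i<k. (t(k := y)) i) = (\<Sum>i<k. t i)"
    by (intro sum.cong) auto
  then show "x + y \<in> minkowski_sum (Suc k) K"
    unfolding minkowski_sum_def using t \<open>y \<in> K k\<close>
    by (intro CollectI exI[of _ "t(k := y)"]) (auto simp: less_Suc_eq)
qed

lemma compact_minkowski_sum:
  fixes K :: "nat \<Rightarrow> 'a::real_normed_vector set"
  assumes "\<And>i. i < k \<Longrightarrow> compact (K i) \<and> K i \<noteq> {}"
  shows "compact (minkowski_sum k K) \<and> minkowski_sum k K \<noteq> {}"
  using assms
proof (induction k)
  case (Suc k)
  then show ?case
    unfolding minkowski_sum_Suc by (auto intro!: compact_sums) blast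
qed simp

lemma brunn_minkowski_compact:
  fixes K :: "nat \<Rightarrow> real set"
  assumes "\<And>i. i < k \<Longrightarrow> compact (K i) \<and> K i \<noteq> {}"
  shows "(\<Sum>i<k. emeasure lborel (K i)) \<le> emeasure lborel (minkowski_sum k K)"
  using assms
proof (induction k)
  case (Suc k)
  have "(\<Sum>i<Suc k. emeasure lborel (K i)) \<le> emeasure lborel (minkowski_sum k K) + emeasure lborel (K k)"
    using Suc by (simp add: add_right_mono)
  also have "\<dots> \<le> emeasure lborel (minkowski_sum (Suc k) K)"
    using Suc.prems compact_minkowski_sum[of k K]
    unfolding minkowski_sum_Suc by (intro emeasure_lborel_sums_compact) auto
  finally show ?case .
qed simp

lemma emeasure_lborel_vimage_divide:
  fixes C :: "real set"
  assumes "C \<in> sets borel" and "c > 0"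
  shows "emeasure lborel ((\<lambda>x. x / c) -` C) = ennreal c * emeasure lborel C"
proof -
  have "(\<lambda>x. x / c) -` C = (*) (1 / c) -` C"
    by auto
  then have "emeasure lborel ((\<lambda>x. x / c) -` C) = emeasure (distr lborel borel ((*) (1 / c))) C"
    using assms by (simp add: emeasure_distr)
  also have "\<dots> = emeasure (density lborel (\<lambda>_. ennreal c)) C"
    using assms by (simp add: lborel_distr_mult)
  also have "\<dots> = ennreal c * emeasure lborel C"
    using assms by (simp add: emeasure_density nn_integral_cmult_indicator)
  finally show ?thesis .
qed

lemma emeasure_lborel_approx_compact:
  fixes A :: "real set"
  assumes "A \<in> sets borel" "A \<noteq> {}" "bounded A" and "e > 0"
  obtains K where "compact K" "K \<noteq> {}" "K \<subseteq> A"
    "emeasure lborel A \<le> emeasure lborel K + ennreal e"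
proof -
  have "A \<in> sets lebesgue"
    using assms by simp
  from sets_lebesgue_inner_closed[OF this \<open>e > 0\<close>] obtain T
    where T: "closed T" "T \<subseteq> A" "emeasure lebesgue (A - T) < ennreal e"
    by metis
  obtain a where "a \<in> A"
    using assms by blast
  define K where "K = insert a T"
  have "compact K"
    using T \<open>a \<in> A\<close> bounded_subset[OF \<open>bounded A\<close>]
    by (auto simp: K_def compact_eq_bounded_closed)
  moreover have "K \<subseteq> A"
    using T \<open>a \<in> A\<close> by (auto simp: K_def)
  moreover have "emeasure lborel A \<le> emeasure lborel K + ennreal e"
  proof -
    have [measurable]: "T \<in> sets borel" "K \<in> sets borel"
      using T by (auto simp: K_def intro: borel_closed)
    have "emeasure lborel A \<le> emeasure lborel (K \<union> (A - T))"
      using assms by (intro emeasure_mono) (auto simp: K_def)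
    also have "\<dots> \<le> emeasure lborel K + emeasure lborel (A - T)"
      using assms by (intro emeasure_subadditive) auto
    also have "emeasure lborel (A - T) = emeasure lebesgue (A - T)"
      using assms by (simp add: emeasure_completion[OF sets_completionI_sets])
    also have "\<dots> \<le> ennreal e"
      using T(3) by simp
    finally show ?thesis
      by (simp add: add_left_mono)
  qed
  ultimately show ?thesis
    using that by (auto simp: K_def)
qed

lemma brunn_minkowski_compact_mean:
  fixes K :: "nat \<Rightarrow> real set"
  assumes "k \<ge> 1"
    and K: "\<And>i. i < k \<Longrightarrow> compact (K i) \<and> K i \<noteq> {}"
    and C: "C \<in> sets borel"
    and mean_in_C: "\<And>t. \<forall>i<k. t i \<in> K i \<Longrightarrow> (\<Sum>i<k. t i) / real k \<in> C"
  shows "(\<Sum>i<k. emeasure lborel (K i)) \<le> ennreal (real k) * emeasure lborel C"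
proof -
  have "minkowski_sum k K \<subseteq> (\<lambda>x. x / real k) -` C"
    using mean_in_C by (auto simp: minkowski_sum_def)
  then have "emeasure lborel (minkowski_sum k K) \<le> emeasure lborel ((\<lambda>x. x / real k) -` C)"
  proof (rule emeasure_mono)
    have "(\<lambda>x::real. x / real k) \<in> borel \<rightarrow>\<^sub>M borel"
      by measurable
    from measurable_sets_borel[OF this C] show "(\<lambda>x. x / real k) -` C \<in> sets lborel"
      by simp
  qed
  also have "\<dots> = ennreal (real k) * emeasure lborel C"
    using C \<open>k \<ge> 1\<close> by (intro emeasure_lborel_vimage_divide) auto
  finally show ?thesis
    using brunn_minkowski_compact[of k K] K by (blast intro: order_trans)
qed

lemma brunn_minkowski_mean:
  fixes A :: "nat \<Rightarrow> real set"
  assumes "k \<ge> 1"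
    and A: "\<And>i. i < k \<Longrightarrow> A i \<in> sets borel" "\<And>i. i < k \<Longrightarrow> A i \<noteq> {}"
      "\<And>i. i < k \<Longrightarrow> bounded (A i)"
    and C: "C \<in> sets borel"
    and mean_in_C: "\<And>t. \<forall>i<k. t i \<in> A i \<Longrightarrow> (\<Sum>i<k. t i) / real k \<in> C"
  shows "(\<Sum>i<k. emeasure lborel (A i)) \<le> ennreal (real k) * emeasure lborel C"
proof (rule ennreal_le_epsilon)
  fix e :: real
  assume "0 < e"
  then have e: "e / real k > 0"
    using \<open>k \<ge> 1\<close> by simp
  have "\<exists>K. compact K \<and> K \<noteq> {} \<and> K \<subseteq> A i \<and>
      emeasure lborel (A i) \<le> emeasure lborel K + ennreal (e / real k)" if "i < k" for i
    using emeasure_lborel_approx_compact[of "A i", OF A(1-3)[OF that] e] by blast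
  then obtain K where K: "\<And>i. i < k \<Longrightarrow> compact (K i) \<and> K i \<noteq> {} \<and> K i \<subseteq> A i \<and>
      emeasure lborel (A i) \<le> emeasure lborel (K i) + ennreal (e / real k)"
    by metis
  have "(\<Sum>i<k. emeasure lborel (A i)) \<le> (\<Sum>i<k. emeasure lborel (K i) + ennreal (e / real k))"
    using K by (intro sum_mono) auto
  also have "\<dots> = (\<Sum>i<k. emeasure lborel (K i)) + ennreal e"
    using \<open>k \<ge> 1\<close> \<open>0 < e\<close>
    by (simp add: sum.distrib ennreal_of_nat_eq_real_of_nat flip: ennreal_mult)
  also have "\<dots> \<le> ennreal (real k) * emeasure lborel C + ennreal e"
  proof (rule add_right_mono, rule brunn_minkowski_compact_mean[OF \<open>k \<ge> 1\<close> _ C])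
    show "compact (K i) \<and> K i \<noteq> {}" if "i < k" for i
      using K[OF that] by blast
    show "(\<Sum>i<k. t i) / real k \<in> C" if "\<forall>i<k. t i \<in> K i" for t
      using that K by (intro mean_in_C) blast
  qed
  finally show "(\<Sum>i<k. emeasure lborel (A i)) \<le> ennreal (real k) * emeasure lborel C + ennreal e" .
qed

section \<open>The layer-cake formula\<close>

lemma emeasure_lborel_Ioi: "emeasure lborel {a::real <..} = \<infinity>"
proof -
  have "of_nat n \<le> emeasure lborel {a <..}" for n
  proof -
    have "of_nat n = emeasure lborel {a <.. a + real n}"
      by (simp add: ennreal_of_nat_eq_real_of_nat)
    also have "\<dots> \<le> emeasure lborel {a <..}"
      by (intro emeasure_mono) auto
    finally show ?thesis .
  qed
  then have "(SUP n. of_nat n :: ennreal) \<le> emeasure lborel {a <..}"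
    by (intro SUP_least) auto
  then show ?thesis
    by (simp add: ennreal_SUP_of_nat_eq_top top_unique)
qed

lemma emeasure_lborel_ennreal_le: "emeasure lborel {s. 0 < s \<and> ennreal s \<le> v} = v"
proof (cases v)
  case (real r)
  then have "{s. 0 < s \<and> ennreal s \<le> v} = {0 <.. r}"
    by auto
  then show ?thesis
    using real by simp
next
  case top
  then have "{s. 0 < s \<and> ennreal s \<le> v} = {0 <..}"
    by auto
  then show ?thesis
    using top by (simp add: emeasure_lborel_Ioi)
qed

lemma emeasure_superlevel_eq_nn_integral:
  fixes f :: "real \<Rightarrow> ennreal"
  assumes [measurable]: "f \<in> borel_measurable borel"
  shows "emeasure lborel {x. ennreal s \<le> f x} = (\<integral>\<^sup>+x. (if ennreal s \<le> f x then 1 else 0) \<partial>lborel)"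
proof -
  have "emeasure lborel {x. ennreal s \<le> f x} = (\<integral>\<^sup>+x. indicator {x. ennreal s \<le> f x} x \<partial>lborel)"
    by (intro nn_integral_indicator[symmetric]) measurable
  then show ?thesis
    by (simp add: indicator_def of_bool_def)
qed

lemma borel_measurable_emeasure_superlevel [measurable]:
  fixes f :: "real \<Rightarrow> ennreal" and g :: "'a \<Rightarrow> real"
  assumes [measurable]: "f \<in> borel_measurable borel" "g \<in> borel_measurable M"
  shows "(\<lambda>s. emeasure lborel {x. ennreal (g s) \<le> f x}) \<in> borel_measurable M"
proof -
  have "(\<lambda>s. emeasure lborel {x. ennreal s \<le> f x}) \<in> borel_measurable borel"
    unfolding emeasure_superlevel_eq_nn_integral[OF assms(1)] by measurable
  from measurable_compose[OF assms(2) this] show ?thesis .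
qed

lemma nn_integral_layer_cake:
  fixes f :: "real \<Rightarrow> ennreal"
  assumes [measurable]: "f \<in> borel_measurable borel"
  shows "(\<integral>\<^sup>+x. f x \<partial>lborel) = (\<integral>\<^sup>+s. indicator {0<..} s * emeasure lborel {x. ennreal s \<le> f x} \<partial>lborel)"
proof -
  have "(\<integral>\<^sup>+s. (if 0 < s \<and> ennreal s \<le> f x then 1 else 0) \<partial>lborel)
      = (\<integral>\<^sup>+s. indicator {s. 0 < s \<and> ennreal s \<le> f x} s \<partial>lborel)" for x
    by (simp add: indicator_def of_bool_def)
  also have "\<dots> x = f x" for x
    by (subst nn_integral_indicator) (simp_all add: emeasure_lborel_ennreal_le)
  finally have "f x = (\<integral>\<^sup>+s. (if 0 < s \<and> ennreal s \<le> f x then 1 else 0) \<partial>lborel)" for x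
    by simp
  then have "(\<integral>\<^sup>+x. f x \<partial>lborel)
      = (\<integral>\<^sup>+x. (\<integral>\<^sup>+s. (if 0 < s \<and> ennreal s \<le> f x then 1 else 0) \<partial>lborel) \<partial>lborel)"
    by simp
  also have "\<dots> = (\<integral>\<^sup>+s. (\<integral>\<^sup>+x. (if 0 < s \<and> ennreal s \<le> f x then 1 else 0) \<partial>lborel) \<partial>lborel)"
    by (rule lborel_pair.Fubini'[symmetric]) measurable
  also have "\<dots> = (\<integral>\<^sup>+s. indicator {0<..} s * emeasure lborel {x. ennreal s \<le> f x} \<partial>lborel)"
  proof (intro nn_integral_cong)
    fix s :: real
    show "(\<integral>\<^sup>+x. (if 0 < s \<and> ennreal s \<le> f x then 1 else 0) \<partial>lborel)
        = indicator {0<..} s * emeasure lborel {x. ennreal s \<le> f x}"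
      by (cases "0 < s") (simp_all add: emeasure_superlevel_eq_nn_integral)
  qed
  finally show ?thesis .
qed

lemma nn_integral_layer_cake_scaled:
  fixes f :: "real \<Rightarrow> ennreal"
  assumes [measurable]: "f \<in> borel_measurable borel" and "c > 0"
  shows "(\<integral>\<^sup>+x. f x \<partial>lborel)
    = ennreal c * (\<integral>\<^sup>+\<tau>. indicator {0<..} \<tau> * emeasure lborel {x. ennreal (c * \<tau>) \<le> f x} \<partial>lborel)"
proof -
  have "(\<integral>\<^sup>+x. f x \<partial>lborel)
      = ennreal \<bar>c\<bar> * (\<integral>\<^sup>+\<tau>. indicator {0<..} (0 + c * \<tau>) *
          emeasure lborel {x. ennreal (0 + c * \<tau>) \<le> f x} \<partial>lborel)"
    unfolding nn_integral_layer_cake[OF assms(1)]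
    by (rule nn_integral_real_affine) (use \<open>c > 0\<close> in auto)
  also have "\<dots> = ennreal c * (\<integral>\<^sup>+\<tau>. indicator {0<..} \<tau> * emeasure lborel {x. ennreal (c * \<tau>) \<le> f x} \<partial>lborel)"
    using \<open>c > 0\<close> by (simp add: indicator_def zero_less_mult_iff)
  finally show ?thesis .
qed

lemma ennreal_power_le_imp_le:
  fixes x y :: ennreal
  assumes "x ^ k \<le> y ^ k" "k > 0"
  shows "x \<le> y"
proof (cases y)
  case (real r)
  show ?thesis
  proof (cases x)
    case (real s)
    then have "s ^ k \<le> r ^ k"
      using assms(1) \<open>y = ennreal r\<close> \<open>0 \<le> r\<close> by (simp add: ennreal_power)
    then have "s \<le> r"
      using \<open>k > 0\<close> \<open>0 \<le> r\<close> by (metis gr0_conv_Suc power_le_imp_le_base)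
    then show ?thesis
      using real \<open>y = ennreal r\<close> by simp
  next
    case top
    then show ?thesis
      using assms \<open>y = ennreal r\<close> by (simp add: power_eq_top_ennreal top_unique ennreal_power)
  qed
qed simp

lemma arith_geom_mean_power:
  fixes b :: "nat \<Rightarrow> real"
  assumes "\<And>i. i < k \<Longrightarrow> 0 \<le> b i"
  shows "real k ^ k * (\<Prod>i<k. b i) \<le> (\<Sum>i<k. b i) ^ k"
proof -
  define P where "P = (\<Prod>i<k. b i)"
  define S where "S = (\<Sum>i<k. b i)"
  have "0 \<le> P"
    unfolding P_def using assms by (intro prod_nonneg) auto
  have "0 \<le> S ^ k"
    unfolding S_def using assms by (intro zero_le_power sum_nonneg) auto
  consider "k = 0" | "P = 0" | "k > 0" "P > 0"
    using \<open>0 \<le> P\<close> by fastforce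
  then have "real k ^ k * P \<le> S ^ k"
  proof cases
    case 1
    then show ?thesis
      by (simp add: P_def)
  next
    case 2
    then show ?thesis
      using \<open>0 \<le> S ^ k\<close> by simp
  next
    case 3
    have "P powr (1 / real k) \<le> S / real k"
      using arith_geom_mean[of "{..<k}" b] 3 assms
      by (simp add: S_def P_def sum_divide_distrib lessThan_empty_iff)
    then have "(P powr (1 / real k)) ^ k \<le> (S / real k) ^ k"
      by (simp add: power_mono)
    also have "(P powr (1 / real k)) ^ k = P"
      using 3 by (simp add: powr_realpow[symmetric] powr_powr)
    finally have "P \<le> S ^ k / real k ^ k"
      by (simp add: power_divide)
    then show ?thesis
      using 3 by (simp add: field_simps)
  qed
  then show ?thesis
    by (simp add: P_def S_def)
qed

lemma arith_geom_mean_power_ennreal: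
  fixes B :: "nat \<Rightarrow> ennreal"
  shows "of_nat k ^ k * (\<Prod>i<k. B i) \<le> (\<Sum>i<k. B i) ^ k"
proof (cases "\<exists>i<k. B i = \<infinity>")
  case True
  then obtain j where "j < k" "B j = \<infinity>"
    by blast
  then have "(\<Sum>i<k. B i) = \<infinity>"
    using member_le_sum[of j "{..<k}" B] by (simp add: top_unique)
  with \<open>j < k\<close> have "(\<Sum>i<k. B i) ^ k = top"
    by (simp add: power_eq_top_ennreal)
  then show ?thesis
    by simp
next
  case False
  define b where "b i = enn2real (B i)" for i
  have B: "B i = ennreal (b i)" if "i < k" for i
    using False that by (auto simp: b_def less_top)
  have b_nonneg: "0 \<le> b i" for i
    by (simp add: b_def)
  have "of_nat k ^ k * (\<Prod>i<k. B i) = ennreal (real k ^ k * (\<Prod>i<k. b i))"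
    using b_nonneg by (simp add: B prod_ennreal ennreal_mult ennreal_power
        ennreal_of_nat_eq_real_of_nat prod_nonneg)
  also have "\<dots> \<le> ennreal ((\<Sum>i<k. b i) ^ k)"
    using b_nonneg by (intro ennreal_leI arith_geom_mean_power)
  also have "\<dots> = (\<Sum>i<k. B i) ^ k"
    using b_nonneg by (simp add: B ennreal_power sum_nonneg)
  finally show ?thesis .
qed

lemma prod_le_power_if_sum_le_ennreal:
  fixes B :: "nat \<Rightarrow> ennreal"
  assumes "k \<ge> 1" and "(\<Sum>i<k. B i) \<le> of_nat k * D"
  shows "(\<Prod>i<k. B i) \<le> D ^ k"
proof -
  have "of_nat k ^ k * (\<Prod>i<k. B i) \<le> (of_nat k * D) ^ k"
    using arith_geom_mean_power_ennreal[of k B] power_mono[OF assms(2), of k] by simp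
  then have "of_nat k ^ k * (\<Prod>i<k. B i) \<le> of_nat k ^ k * D ^ k"
    by (simp add: power_mult_distrib)
  moreover have "(of_nat k ^ k :: ennreal) \<noteq> 0" "(of_nat k ^ k :: ennreal) \<noteq> top"
    using \<open>k \<ge> 1\<close> by (simp_all add: power_eq_top_ennreal)
  ultimately show ?thesis
    using ennreal_mult_le_mult_iff by blast
qed

section \<open>The Prekopa--Leindler inequality on the real line\<close>

lemma sum_emeasure_superlevel_le:
  fixes G :: "nat \<Rightarrow> real \<Rightarrow> ennreal" and H :: "real \<Rightarrow> ennreal"
  assumes "k \<ge> 1"
    and G_meas: "\<And>i. i < k \<Longrightarrow> G i \<in> borel_measurable borel"
    and H_meas [measurable]: "H \<in> borel_measurable borel"
    and support: "\<And>i t. i < k \<Longrightarrow> N < \<bar>t\<bar> \<Longrightarrow> G i t = 0"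
    and sup: "\<And>i. i < k \<Longrightarrow> (SUP t. G i t) = ennreal (m i)"
    and m_pos: "\<And>i. i < k \<Longrightarrow> 0 < m i"
    and "c > 0" and c_pow: "c ^ k = (\<Prod>i<k. m i)"
    and hyp: "\<And>t. (\<Prod>i<k. G i (t i)) \<le> H ((\<Sum>i<k. t i) / real k) ^ k"
    and "0 < \<tau>" "\<tau> < 1"
  shows "(\<Sum>i<k. emeasure lborel {t. ennreal (m i * \<tau>) \<le> G i t})
    \<le> ennreal (real k) * emeasure lborel {t. ennreal (c * \<tau>) \<le> H t}"
proof (rule brunn_minkowski_mean[OF \<open>k \<ge> 1\<close>])
  fix i assume "i < k"
  note G_meas[OF \<open>i < k\<close>, measurable]
  show "{t. ennreal (m i * \<tau>) \<le> G i t} \<in> sets borel"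
    by measurable
  have "ennreal (m i * \<tau>) < (SUP t. G i t)"
    using sup[OF \<open>i < k\<close>] m_pos[OF \<open>i < k\<close>] \<open>\<tau> < 1\<close> by (simp add: ennreal_lessI)
  then show "{t. ennreal (m i * \<tau>) \<le> G i t} \<noteq> {}"
    by (auto simp: less_SUP_iff intro: less_imp_le)
  have "{t. ennreal (m i * \<tau>) \<le> G i t} \<subseteq> {-N..N}"
  proof
    fix t assume "t \<in> {t. ennreal (m i * \<tau>) \<le> G i t}"
    moreover have "0 < m i * \<tau>"
      using m_pos[OF \<open>i < k\<close>] \<open>0 < \<tau>\<close> by simp
    ultimately show "t \<in> {-N..N}"
      using support[OF \<open>i < k\<close>, of t] by (force simp: ennreal_le_iff2 abs_le_iff)
  qed
  then show "bounded {t. ennreal (m i * \<tau>) \<le> G i t}"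
    by (rule bounded_subset[OF bounded_closed_interval])
next
  show "{t. ennreal (c * \<tau>) \<le> H t} \<in> sets borel"
    by measurable
next
  fix t assume t: "\<forall>i<k. t i \<in> {t. ennreal (m i * \<tau>) \<le> G i t}"
  have "ennreal (c * \<tau>) ^ k = ennreal (\<Prod>i<k. m i * \<tau>)"
    using \<open>c > 0\<close> \<open>0 < \<tau>\<close> by (simp add: ennreal_power power_mult_distrib c_pow prod.distrib)
  also have "\<dots> = (\<Prod>i<k. ennreal (m i * \<tau>))"
    using \<open>0 < \<tau>\<close> m_pos by (intro prod_ennreal[symmetric]) (simp add: less_imp_le)
  also have "\<dots> \<le> (\<Prod>i<k. G i (t i))"
    using t by (intro prod_mono_ennreal) auto
  also have "\<dots> \<le> H ((\<Sum>i<k. t i) / real k) ^ k"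
    by (rule hyp)
  finally show "(\<Sum>i<k. t i) / real k \<in> {t. ennreal (c * \<tau>) \<le> H t}"
    using \<open>k \<ge> 1\<close> by (auto intro: ennreal_power_le_imp_le)
qed

lemma SUP_eq_ennreal_pos:
  fixes G :: "real \<Rightarrow> ennreal"
  assumes "\<And>t. G t \<le> ennreal N" and "(\<integral>\<^sup>+t. G t \<partial>lborel) \<noteq> 0"
  shows "\<exists>r. (SUP t. G t) = ennreal r \<and> 0 < r"
proof -
  have "(SUP t. G t) \<le> ennreal N"
    using assms(1) by (intro SUP_least)
  moreover have "(SUP t. G t) \<noteq> 0"
  proof
    assume "(SUP t. G t) = 0"
    then have "G = (\<lambda>_. 0)"
      by (simp add: fun_eq_iff SUP_eq_iff)
    with assms(2) show False
      by simp
  qed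
  ultimately show ?thesis
    by (cases "SUP t. G t") (auto simp: top_unique)
qed

lemma emeasure_superlevel_above_SUP:
  fixes G :: "real \<Rightarrow> ennreal"
  assumes "(SUP t. G t) = ennreal m" and "0 < m" and "1 < \<tau>"
  shows "emeasure lborel {t. ennreal (m * \<tau>) \<le> G t} = 0"
proof -
  have "G t < ennreal (m * \<tau>)" for t
  proof -
    have "G t \<le> ennreal m"
      using assms(1) by (metis SUP_upper UNIV_I)
    also have "\<dots> < ennreal (m * \<tau>)"
      using assms(2,3) by (intro ennreal_lessI) auto
    finally show ?thesis .
  qed
  then have "{t. ennreal (m * \<tau>) \<le> G t} = {}"
    by (auto simp: not_le[symmetric])
  then show ?thesis
    by simp
qed

lemma nn_integral_sum_emeasure_superlevel_le:
  fixes G :: "nat \<Rightarrow> real \<Rightarrow> ennreal" and H :: "real \<Rightarrow> ennreal"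
  assumes "k \<ge> 1"
    and G_meas: "\<And>i. i < k \<Longrightarrow> G i \<in> borel_measurable borel"
    and H_meas [measurable]: "H \<in> borel_measurable borel"
    and support: "\<And>i t. i < k \<Longrightarrow> N < \<bar>t\<bar> \<Longrightarrow> G i t = 0"
    and sup: "\<And>i. i < k \<Longrightarrow> (SUP t. G i t) = ennreal (m i)"
    and m_pos: "\<And>i. i < k \<Longrightarrow> 0 < m i"
    and "c > 0" and c_pow: "c ^ k = (\<Prod>i<k. m i)"
    and hyp: "\<And>t. (\<Prod>i<k. G i (t i)) \<le> H ((\<Sum>i<k. t i) / real k) ^ k"
  shows "(\<Sum>i<k. \<integral>\<^sup>+\<tau>. indicator {0<..} \<tau> * emeasure lborel {t. ennreal (m i * \<tau>) \<le> G i t} \<partial>lborel)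
    \<le> of_nat k * (\<integral>\<^sup>+\<tau>. indicator {0<..} \<tau> * emeasure lborel {t. ennreal (c * \<tau>) \<le> H t} \<partial>lborel)"
proof -
  define A where "A i \<tau> = indicator {0<..} \<tau> * emeasure lborel {t. ennreal (m i * \<tau>) \<le> G i t}" for i \<tau>
  define C where "C \<tau> = indicator {0<..} \<tau> * emeasure lborel {t. ennreal (c * \<tau>) \<le> H t}" for \<tau>
  have A_meas: "A i \<in> borel_measurable borel" if "i < k" for i
    using G_meas[OF that] unfolding A_def by measurable
  have "(\<Sum>i<k. A i \<tau>) \<le> of_nat k * C \<tau>" if "\<tau> \<noteq> 1" for \<tau>
  proof -
    consider "\<tau> \<le> 0" | "0 < \<tau>" "\<tau> < 1" | "1 < \<tau>"
      using \<open>\<tau> \<noteq> 1\<close> by linarith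
    then show ?thesis
    proof cases
      case 1
      then show ?thesis
        by (simp add: A_def)
    next
      case 2
      then show ?thesis
        using sum_emeasure_superlevel_le[OF assms] by (simp add: A_def C_def ennreal_of_nat_eq_real_of_nat)
    next
      case 3
      then show ?thesis
        using sup m_pos by (simp add: A_def emeasure_superlevel_above_SUP)
    qed
  qed
  then have "(\<integral>\<^sup>+\<tau>. (\<Sum>i<k. A i \<tau>) \<partial>lborel) \<le> (\<integral>\<^sup>+\<tau>. of_nat k * C \<tau> \<partial>lborel)"
    by (intro nn_integral_mono_AE) (use AE_lborel_singleton[of 1] in \<open>eventually_elim, auto\<close>)
  moreover have "(\<integral>\<^sup>+\<tau>. (\<Sum>i<k. A i \<tau>) \<partial>lborel) = (\<Sum>i<k. \<integral>\<^sup>+\<tau>. A i \<tau> \<partial>lborel)"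
    using A_meas by (intro nn_integral_sum) auto
  moreover have "(\<integral>\<^sup>+\<tau>. of_nat k * C \<tau> \<partial>lborel) = of_nat k * (\<integral>\<^sup>+\<tau>. C \<tau> \<partial>lborel)"
    unfolding C_def by (intro nn_integral_cmult) measurable
  ultimately show ?thesis
    by (simp add: A_def C_def)
qed

text \<open>Normalising each \<open>G i\<close> by its supremum \<open>m i\<close>, the layer-cake formula turns the
  integrals into integrals over \<open>0 < \<tau> < 1\<close> of measures of superlevel sets, to which
  Brunn--Minkowski applies; AM--GM then converts the bound on the sum into one on the product.\<close>

lemma prekopa_leindler_bounded:
  fixes G :: "nat \<Rightarrow> real \<Rightarrow> ennreal" and H :: "real \<Rightarrow> ennreal"
  assumes "k \<ge> 1"
    and G_meas: "\<And>i. i < k \<Longrightarrow> G i \<in> borel_measurable borel"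
    and H_meas [measurable]: "H \<in> borel_measurable borel"
    and bounded: "\<And>i t. i < k \<Longrightarrow> G i t \<le> ennreal N"
    and support: "\<And>i t. i < k \<Longrightarrow> N < \<bar>t\<bar> \<Longrightarrow> G i t = 0"
    and hyp: "\<And>t. (\<Prod>i<k. G i (t i)) \<le> H ((\<Sum>i<k. t i) / real k) ^ k"
  shows "(\<Prod>i<k. \<integral>\<^sup>+t. G i t \<partial>lborel) \<le> (\<integral>\<^sup>+t. H t \<partial>lborel) ^ k"
proof (cases "\<exists>i<k. (\<integral>\<^sup>+t. G i t \<partial>lborel) = 0")
  case True
  then have prod_zero: "(\<Prod>i<k. \<integral>\<^sup>+t. G i t \<partial>lborel) = 0"
    by auto
  show ?thesis
    unfolding prod_zero by simp
next
  case False
  have "\<exists>r. (SUP t. G i t) = ennreal r \<and> 0 < r" if "i < k" for i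
    using bounded[OF that] False that by (intro SUP_eq_ennreal_pos) auto
  then obtain m where sup: "\<And>i. i < k \<Longrightarrow> (SUP t. G i t) = ennreal (m i)"
    and m_pos: "\<And>i. i < k \<Longrightarrow> 0 < m i"
    by metis
  define c where "c = root k (\<Prod>i<k. m i)"
  have "(\<Prod>i<k. m i) > 0"
    using m_pos by (intro prod_pos) auto
  then have "c > 0" and c_pow: "c ^ k = (\<Prod>i<k. m i)"
    using \<open>k \<ge> 1\<close> by (simp_all add: c_def)
  define B where "B i = (\<integral>\<^sup>+\<tau>. indicator {0<..} \<tau> * emeasure lborel {t. ennreal (m i * \<tau>) \<le> G i t} \<partial>lborel)" for i
  define D where "D = (\<integral>\<^sup>+\<tau>. indicator {0<..} \<tau> * emeasure lborel {t. ennreal (c * \<tau>) \<le> H t} \<partial>lborel)"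
  have "(\<Prod>i<k. B i) \<le> D ^ k"
    using nn_integral_sum_emeasure_superlevel_le[OF assms(1-3) support sup m_pos \<open>c > 0\<close> c_pow hyp]
    unfolding B_def D_def by (rule prod_le_power_if_sum_le_ennreal[OF \<open>k \<ge> 1\<close>])
  have "(\<Prod>i<k. \<integral>\<^sup>+t. G i t \<partial>lborel) = (\<Prod>i<k. ennreal (m i) * B i)"
    unfolding B_def using G_meas m_pos by (intro prod.cong nn_integral_layer_cake_scaled) auto
  also have "\<dots> = ennreal (c ^ k) * (\<Prod>i<k. B i)"
    using m_pos prod_ennreal[of "{..<k}" m] by (simp add: prod.distrib c_pow less_imp_le)
  also have "\<dots> \<le> ennreal (c ^ k) * D ^ k"
    using \<open>(\<Prod>i<k. B i) \<le> D ^ k\<close> by (rule mult_left_mono) simp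
  also have "\<dots> = (\<integral>\<^sup>+t. H t \<partial>lborel) ^ k"
    unfolding D_def nn_integral_layer_cake_scaled[OF H_meas \<open>c > 0\<close>]
    using \<open>c > 0\<close> by (simp add: power_mult_distrib ennreal_power)
  finally show ?thesis .
qed

lemma SUP_mult_incseq_ennreal:
  fixes f g :: "nat \<Rightarrow> ennreal"
  assumes "incseq f" and "incseq g"
  shows "(SUP n. f n) * (SUP n. g n) = (SUP n. f n * g n)"
proof (rule antisym)
  show "(SUP n. f n) * (SUP n. g n) \<le> (SUP n. f n * g n)"
    unfolding SUP_mult_right_ennreal
  proof (rule SUP_least)
    fix n
    show "f n * (SUP n. g n) \<le> (SUP n. f n * g n)"
      unfolding SUP_mult_left_ennreal
    proof (rule SUP_least)
      fix m
      have "f n * g m \<le> f (max n m) * g (max n m)"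
        using assms by (intro mult_mono) (auto simp: incseq_def)
      also have "\<dots> \<le> (SUP n. f n * g n)"
        by (rule SUP_upper) simp
      finally show "f n * g m \<le> (SUP n. f n * g n)" .
    qed
  qed
  show "(SUP n. f n * g n) \<le> (SUP n. f n) * (SUP n. g n)"
    by (rule SUP_least) (intro mult_mono SUP_upper; simp)
qed

lemma prod_SUP_incseq_ennreal:
  fixes a :: "'i \<Rightarrow> nat \<Rightarrow> ennreal"
  assumes "finite I" "\<And>i. i \<in> I \<Longrightarrow> incseq (a i)"
  shows "(\<Prod>i\<in>I. SUP n. a i n) = (SUP n. \<Prod>i\<in>I. a i n)"
  using assms
proof (induction I rule: finite_induct)
  case (insert j I)
  have "incseq (\<lambda>n. \<Prod>i\<in>I. a i n)"
    using insert.prems by (auto simp: incseq_def intro!: prod_mono_ennreal)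
  then have "(SUP n. a j n) * (SUP n. \<Prod>i\<in>I. a i n) = (SUP n. a j n * (\<Prod>i\<in>I. a i n))"
    using insert.prems by (intro SUP_mult_incseq_ennreal) auto
  with insert show ?case
    by simp
qed simp

lemma SUP_min_of_nat_ennreal: "(SUP m. min v (of_nat m :: ennreal)) = v"
proof (rule antisym)
  show "(SUP m. min v (of_nat m :: ennreal)) \<le> v"
    by (rule SUP_least) simp
  show "v \<le> (SUP m. min v (of_nat m :: ennreal))"
  proof (cases "v = top")
    case True
    have "(SUP m. of_nat m :: ennreal) \<le> (SUP m. min v (of_nat m :: ennreal))"
      using True by simp
    then show ?thesis
      using True by (simp add: ennreal_SUP_of_nat_eq_top)
  next
    case False
    then obtain m where "v < of_nat m"
      using ennreal_Ex_less_of_nat less_top by blast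
    then have "v = min v (of_nat m)"
      by simp
    also have "\<dots> \<le> (SUP m. min v (of_nat m :: ennreal))"
      by (rule SUP_upper) simp
    finally show ?thesis .
  qed
qed

lemma SUP_truncation_ennreal:
  fixes v :: ennreal and t :: real
  shows "(SUP n. min v (of_nat n) * indicator {- real n .. real n} t) = v"
proof (rule antisym)
  show "(SUP n. min v (of_nat n) * indicator {- real n .. real n} t) \<le> v"
    by (rule SUP_least) (auto simp: indicator_def)
  have "min v (of_nat m) \<le> (SUP n. min v (of_nat n) * indicator {- real n .. real n} t)" for m
  proof -
    define n where "n = max m (nat \<lceil>\<bar>t\<bar>\<rceil>)"
    have "\<bar>t\<bar> \<le> real n"
      unfolding n_def by linarith
    then have "indicator {- real n .. real n} t = (1::ennreal)"
      by (auto simp: indicator_def)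
    moreover have "min v (of_nat m) \<le> min v (of_nat n)"
      unfolding n_def by (intro min.mono) auto
    ultimately have "min v (of_nat m) \<le> min v (of_nat n) * indicator {- real n .. real n} t"
      by simp
    also have "\<dots> \<le> (SUP n. min v (of_nat n) * indicator {- real n .. real n} t)"
      by (rule SUP_upper) simp
    finally show ?thesis .
  qed
  then have "(SUP m. min v (of_nat m :: ennreal)) \<le> (SUP n. min v (of_nat n) * indicator {- real n .. real n} t)"
    by (intro SUP_least) auto
  then show "v \<le> (SUP n. min v (of_nat n) * indicator {- real n .. real n} t)"
    by (simp add: SUP_min_of_nat_ennreal)
qed

lemma incseq_truncation_ennreal: "incseq (\<lambda>n. min v (of_nat n) * indicator {- real n .. real n} t :: ennreal)"
proof (rule incseq_SucI)
  fix n
  have "indicator {- real n .. real n} t \<le> (indicator {- real (Suc n) .. real (Suc n)} t :: ennreal)"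
    by (auto simp: indicator_def)
  then show "min v (of_nat n) * indicator {- real n .. real n} t
      \<le> min v (of_nat (Suc n)) * indicator {- real (Suc n) .. real (Suc n)} t"
    by (intro mult_mono min.mono) auto
qed

lemma nn_integral_eq_SUP_truncation:
  fixes G :: "real \<Rightarrow> ennreal"
  assumes [measurable]: "G \<in> borel_measurable borel"
  shows "(\<integral>\<^sup>+t. G t \<partial>lborel) = (SUP n. \<integral>\<^sup>+t. min (G t) (of_nat n) * indicator {- real n .. real n} t \<partial>lborel)"
proof -
  have "incseq (\<lambda>n. min (G t) (of_nat n) * indicator {- real n .. real n} t)" for t
    by (rule incseq_truncation_ennreal)
  then have "(\<integral>\<^sup>+t. (SUP n. min (G t) (of_nat n) * indicator {- real n .. real n} t) \<partial>lborel)
      = (SUP n. \<integral>\<^sup>+t. min (G t) (of_nat n) * indicator {- real n .. real n} t \<partial>lborel)"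
    by (intro nn_integral_monotone_convergence_SUP) (auto simp: incseq_def le_fun_def)
  then show ?thesis
    by (simp add: SUP_truncation_ennreal)
qed

lemma prekopa_leindler_real:
  fixes G :: "nat \<Rightarrow> real \<Rightarrow> ennreal" and H :: "real \<Rightarrow> ennreal"
  assumes "k \<ge> 1"
    and G_meas: "\<And>i. i < k \<Longrightarrow> G i \<in> borel_measurable borel"
    and H_meas [measurable]: "H \<in> borel_measurable borel"
    and hyp: "\<And>t. (\<Prod>i<k. G i (t i)) \<le> H ((\<Sum>i<k. t i) / real k) ^ k"
  shows "(\<Prod>i<k. \<integral>\<^sup>+t. G i t \<partial>lborel) \<le> (\<integral>\<^sup>+t. H t \<partial>lborel) ^ k"
proof -
  define T where "T n i t = min (G i t) (of_nat n) * indicator {- real n .. real n} t" for n i t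
  have T_meas: "T n i \<in> borel_measurable borel" if "i < k" for n i
    using G_meas[OF that] unfolding T_def by measurable
  have "(\<Prod>i<k. \<integral>\<^sup>+t. T n i t \<partial>lborel) \<le> (\<integral>\<^sup>+t. H t \<partial>lborel) ^ k" for n
  proof (rule prekopa_leindler_bounded[OF \<open>k \<ge> 1\<close> T_meas H_meas])
    show "T n i t \<le> ennreal (real n)" for i t
    proof -
      have "T n i t \<le> min (G i t) (of_nat n)"
        by (simp add: T_def indicator_def)
      then show ?thesis
        by (simp add: ennreal_of_nat_eq_real_of_nat)
    qed
    show "T n i t = 0" if "real n < \<bar>t\<bar>" for i t
      using that by (auto simp: T_def indicator_def)
    show "(\<Prod>i<k. T n i (t i)) \<le> H ((\<Sum>i<k. t i) / real k) ^ k" for t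
    proof -
      have "(\<Prod>i<k. T n i (t i)) \<le> (\<Prod>i<k. G i (t i))"
        by (intro prod_mono_ennreal) (simp add: T_def indicator_def)
      also have "\<dots> \<le> H ((\<Sum>i<k. t i) / real k) ^ k"
        by (rule hyp)
      finally show ?thesis .
    qed
  qed
  then have "(SUP n. \<Prod>i<k. \<integral>\<^sup>+t. T n i t \<partial>lborel) \<le> (\<integral>\<^sup>+t. H t \<partial>lborel) ^ k"
    by (rule SUP_least)
  moreover have "(\<Prod>i<k. SUP n. \<integral>\<^sup>+t. T n i t \<partial>lborel) = (SUP n. \<Prod>i<k. \<integral>\<^sup>+t. T n i t \<partial>lborel)"
  proof (rule prod_SUP_incseq_ennreal)
    show "incseq (\<lambda>n. \<integral>\<^sup>+t. T n i t \<partial>lborel)" for i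
    proof (rule incseq_SucI)
      fix n
      have "T n i t \<le> T (Suc n) i t" for t
        unfolding T_def by (rule incseq_SucD[OF incseq_truncation_ennreal])
      then show "(\<integral>\<^sup>+t. T n i t \<partial>lborel) \<le> (\<integral>\<^sup>+t. T (Suc n) i t \<partial>lborel)"
        by (intro nn_integral_mono)
    qed
  qed simp
  moreover have "(\<Prod>i<k. \<integral>\<^sup>+t. G i t \<partial>lborel) = (\<Prod>i<k. SUP n. \<integral>\<^sup>+t. T n i t \<partial>lborel)"
    unfolding T_def using G_meas by (intro prod.cong refl nn_integral_eq_SUP_truncation) simp
  ultimately show ?thesis
    by simp
qed

section \<open>The multiplicative Prekopa--Leindler inequality\<close>

lemma emeasure_density_inverse_vimage_ln:
  fixes l u :: real
  assumes "l \<le> u"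
  shows "emeasure (density lborel (\<lambda>y. ennreal (indicator {0<..} y / y))) (ln -` {l<..<u}) = ennreal (u - l)"
proof -
  have "(ln::real \<Rightarrow> real) \<in> borel \<rightarrow>\<^sub>M borel"
    by measurable
  from measurable_sets_borel[OF this, of "{l<..<u}"] have [measurable]: "ln -` {l<..<u} \<in> sets borel"
    by simp
  have "emeasure (density lborel (\<lambda>y. ennreal (indicator {0<..} y / y))) (ln -` {l<..<u})
      = (\<integral>\<^sup>+y. ennreal (indicator {0<..} y / y) * indicator (ln -` {l<..<u}) y \<partial>lborel)"
    by (rule emeasure_density) measurable
  also have "\<dots> = (\<integral>\<^sup>+y. ennreal (1 / y) * indicator {exp l .. exp u} y \<partial>lborel)"
  proof (rule nn_integral_cong_AE)
    have "AE y in lborel. y \<noteq> exp l \<and> y \<noteq> exp u"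
      using AE_lborel_singleton[of "exp l"] AE_lborel_singleton[of "exp u"] by eventually_elim auto
    then show "AE y in lborel. ennreal (indicator {0<..} y / y) * indicator (ln -` {l<..<u}) y
        = ennreal (1 / y) * indicator {exp l .. exp u} y"
    proof eventually_elim
      fix y :: real
      assume "y \<noteq> exp l \<and> y \<noteq> exp u"
      moreover have "l < ln y \<longleftrightarrow> exp l < y" "ln y < u \<longleftrightarrow> y < exp u" if "0 < y"
        using that by (metis exp_less_cancel_iff exp_ln)+
      moreover have "y \<notin> {exp l .. exp u}" if "\<not> 0 < y"
        using that exp_gt_zero[of l] by (auto simp del: exp_gt_zero)
      ultimately show "ennreal (indicator {0<..} y / y) * indicator (ln -` {l<..<u}) y
          = ennreal (1 / y) * indicator {exp l .. exp u} y"
        by (cases "0 < y") (auto simp: indicator_def)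
    qed
  qed
  also have "\<dots> = ennreal (ln (exp u) - ln (exp l))"
  proof (rule nn_integral_FTC_Icc)
    fix x :: real
    assume "x \<in> {exp l .. exp u}"
    then have "0 < x"
      using exp_gt_zero[of l] by (auto simp del: exp_gt_zero)
    then show "DERIV ln x :> 1 / x" "0 \<le> 1 / x"
      by (auto intro: DERIV_ln_divide)
  qed (use \<open>l \<le> u\<close> in auto)
  finally show ?thesis
    by simp
qed

lemma lborel_eq_distr_ln: "lborel = distr (density lborel (\<lambda>y. ennreal (indicator {0<..} y / y))) borel ln"
proof (rule lborel_eqI)
  fix l u :: real
  assume "\<And>b. b \<in> Basis \<Longrightarrow> l \<bullet> b \<le> u \<bullet> b"
  then have "l \<le> u"
    by simp
  have "(ln::real \<Rightarrow> real) \<in> borel \<rightarrow>\<^sub>M borel"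
    by measurable
  then show "emeasure (distr (density lborel (\<lambda>y. ennreal (indicator {0<..} y / y))) borel ln) (box l u)
      = (\<Prod>b\<in>Basis. (u - l) \<bullet> b)"
    using emeasure_density_inverse_vimage_ln[OF \<open>l \<le> u\<close>] by (simp add: emeasure_distr)
qed simp

lemma nn_integral_exp_substitution:
  fixes F :: "real \<Rightarrow> ennreal"
  assumes [measurable]: "F \<in> borel_measurable borel"
  shows "(\<integral>\<^sup>+y. F y * indicator {0<..} y \<partial>lborel) = (\<integral>\<^sup>+t. F (exp t) * ennreal (exp t) \<partial>lborel)"
proof -
  define \<nu> where "\<nu> = density lborel (\<lambda>y. ennreal (indicator {0<..} y / y))"
  have "(\<integral>\<^sup>+t. F (exp t) * ennreal (exp t) \<partial>lborel) = (\<integral>\<^sup>+t. F (exp t) * ennreal (exp t) \<partial>distr \<nu> borel ln)"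
    unfolding \<nu>_def by (subst lborel_eq_distr_ln[symmetric]) (rule refl)
  also have "\<dots> = (\<integral>\<^sup>+y. F (exp (ln y)) * ennreal (exp (ln y)) \<partial>\<nu>)"
    by (rule nn_integral_distr) (simp_all add: \<nu>_def)
  also have "\<dots> = (\<integral>\<^sup>+y. ennreal (indicator {0<..} y / y) * (F (exp (ln y)) * ennreal (exp (ln y))) \<partial>lborel)"
    unfolding \<nu>_def by (rule nn_integral_density) measurable
  also have "\<dots> = (\<integral>\<^sup>+y. F y * indicator {0<..} y \<partial>lborel)"
  proof (rule nn_integral_cong)
    fix y :: real
    show "ennreal (indicator {0<..} y / y) * (F (exp (ln y)) * ennreal (exp (ln y))) = F y * indicator {0<..} y"
    proof (cases "0 < y")
      case True
      then have "ennreal (1 / y) * ennreal y = 1"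
        by (simp flip: ennreal_mult)
      then have "ennreal (1 / y) * (F y * ennreal y) = F y"
        by (metis mult.commute mult.left_commute mult_1)
      with True show ?thesis
        by (simp add: indicator_def)
    qed (simp add: indicator_def)
  qed
  finally show ?thesis ..
qed

lemma root_prod_exp:
  assumes "k \<ge> 1"
  shows "root k (\<Prod>i<k. exp (t i)) = exp ((\<Sum>i<k. t i) / real k)"
proof -
  have "(\<Prod>i<k. exp (t i)) = exp (\<Sum>i<k. t i)"
    by (simp add: exp_sum)
  moreover have "exp ((\<Sum>i<k. t i) / real k) ^ k = exp (\<Sum>i<k. t i)"
    using assms by (simp flip: exp_of_nat_mult)
  ultimately show ?thesis
    using assms by (intro real_root_pos_unique) auto
qed

lemma multiplicative_prekopa_leindler_real:
  fixes G :: "nat \<Rightarrow> real \<Rightarrow> ennreal" and H :: "real \<Rightarrow> ennreal"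
  assumes "k \<ge> 1"
    and G_meas: "\<And>i. i < k \<Longrightarrow> G i \<in> borel_measurable borel"
    and H_meas [measurable]: "H \<in> borel_measurable borel"
    and hyp: "\<And>y. \<forall>i<k. 0 < y i \<Longrightarrow> (\<Prod>i<k. G i (y i)) \<le> H (root k (\<Prod>i<k. y i)) ^ k"
  shows "(\<Prod>i<k. \<integral>\<^sup>+y. G i y * indicator {0..} y \<partial>lborel) \<le> (\<integral>\<^sup>+y. H y * indicator {0<..} y \<partial>lborel) ^ k"
proof -
  have G_eq: "(\<integral>\<^sup>+y. G i y * indicator {0..} y \<partial>lborel) = (\<integral>\<^sup>+t. G i (exp t) * ennreal (exp t) \<partial>lborel)"
    if "i < k" for i
  proof -
    have "(\<integral>\<^sup>+y. G i y * indicator {0..} y \<partial>lborel) = (\<integral>\<^sup>+y. G i y * indicator {0<..} y \<partial>lborel)"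
      by (intro nn_integral_cong_AE eventually_mono[OF AE_lborel_singleton[of 0]])
        (auto simp: indicator_def)
    also have "\<dots> = (\<integral>\<^sup>+t. G i (exp t) * ennreal (exp t) \<partial>lborel)"
      using G_meas[OF that] by (rule nn_integral_exp_substitution)
    finally show ?thesis .
  qed
  have "(\<Prod>i<k. \<integral>\<^sup>+t. G i (exp t) * ennreal (exp t) \<partial>lborel) \<le> (\<integral>\<^sup>+t. H (exp t) * ennreal (exp t) \<partial>lborel) ^ k"
  proof (rule prekopa_leindler_real[OF \<open>k \<ge> 1\<close>])
    show "(\<lambda>t. G i (exp t) * ennreal (exp t)) \<in> borel_measurable borel" if "i < k" for i
      using G_meas[OF that] by measurable
    show "(\<lambda>t. H (exp t) * ennreal (exp t)) \<in> borel_measurable borel"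
      by measurable
    fix t :: "nat \<Rightarrow> real"
    define s where "s = (\<Sum>i<k. t i) / real k"
    have exp_s: "ennreal (exp s) ^ k = (\<Prod>i<k. ennreal (exp (t i)))"
      using \<open>k \<ge> 1\<close> by (simp add: s_def ennreal_power prod_ennreal exp_sum flip: exp_of_nat_mult)
    have "(\<Prod>i<k. G i (exp (t i)) * ennreal (exp (t i))) = (\<Prod>i<k. G i (exp (t i))) * ennreal (exp s) ^ k"
      by (simp add: exp_s prod.distrib)
    also have "\<dots> \<le> H (root k (\<Prod>i<k. exp (t i))) ^ k * ennreal (exp s) ^ k"
      by (intro mult_right_mono hyp) auto
    also have "\<dots> = (H (exp s) * ennreal (exp s)) ^ k"
      by (simp add: s_def root_prod_exp[OF \<open>k \<ge> 1\<close>] power_mult_distrib)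
    finally show "(\<Prod>i<k. G i (exp (t i)) * ennreal (exp (t i))) \<le> (H (exp s) * ennreal (exp s)) ^ k" .
  qed
  then show ?thesis
    by (simp add: G_eq nn_integral_exp_substitution)
qed

definition coord_indicator :: "real set \<Rightarrow> 'b set \<Rightarrow> ('b \<Rightarrow> real) \<Rightarrow> ennreal" where
  "coord_indicator S I y = (\<Prod>j\<in>I. indicator S (y j))"

lemma coord_indicator_measurable [measurable]:
  assumes [measurable]: "finite I" "S \<in> sets borel"
  shows "coord_indicator S I \<in> borel_measurable (PiM I (\<lambda>_. lborel))"
  unfolding coord_indicator_def by measurable

lemma coord_indicator_insert:
  assumes "finite I" "j \<notin> I"
  shows "coord_indicator S (insert j I) (x(j := t)) = indicator S t * coord_indicator S I x"
proof -
  have "(\<Prod>l\<in>I. indicator S ((x(j := t)) l)) = (\<Prod>l\<in>I. indicator S (x l) :: ennreal)"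
    using assms by (intro prod.cong) auto
  then show ?thesis
    using assms by (simp add: coord_indicator_def)
qed

lemma nn_integral_PiM_insert_coord_indicator:
  fixes f :: "('b \<Rightarrow> real) \<Rightarrow> ennreal"
  assumes "finite I" "j \<notin> I" and [measurable]: "S \<in> sets borel"
    and [measurable]: "f \<in> borel_measurable (PiM (insert j I) (\<lambda>_. lborel))"
  shows "(\<integral>\<^sup>+y. f y * coord_indicator S (insert j I) y \<partial>PiM (insert j I) (\<lambda>_. lborel))
    = (\<integral>\<^sup>+t. (\<integral>\<^sup>+x. f (x(j := t)) * coord_indicator S I x \<partial>PiM I (\<lambda>_. lborel)) * indicator S t \<partial>lborel)"
proof -
  interpret product_sigma_finite "\<lambda>_. lborel :: real measure"
    by standard
  note [measurable] = \<open>finite I\<close>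
  have "(\<integral>\<^sup>+y. f y * coord_indicator S (insert j I) y \<partial>PiM (insert j I) (\<lambda>_. lborel))
      = (\<integral>\<^sup>+t. \<integral>\<^sup>+x. f (x(j := t)) * coord_indicator S (insert j I) (x(j := t)) \<partial>PiM I (\<lambda>_. lborel) \<partial>lborel)"
    using assms by (intro product_nn_integral_insert_rev) auto
  also have "\<dots> = (\<integral>\<^sup>+t. \<integral>\<^sup>+x. (f (x(j := t)) * coord_indicator S I x) * indicator S t \<partial>PiM I (\<lambda>_. lborel) \<partial>lborel)"
    using assms by (intro nn_integral_cong) (simp add: coord_indicator_insert ac_simps)
  also have "\<dots> = (\<integral>\<^sup>+t. (\<integral>\<^sup>+x. f (x(j := t)) * coord_indicator S I x \<partial>PiM I (\<lambda>_. lborel)) * indicator S t \<partial>lborel)"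
    by (intro nn_integral_cong nn_integral_multc) measurable
  finally show ?thesis .
qed

lemma measurable_fun_upd_PiM:
  assumes "t \<in> space (M j)"
  shows "(\<lambda>x. x(j := t)) \<in> PiM I M \<rightarrow>\<^sub>M PiM (insert j I) M"
proof -
  have "(\<lambda>x. (x, t)) \<in> PiM I M \<rightarrow>\<^sub>M PiM I M \<Otimes>\<^sub>M M j"
    using assms by measurable
  from measurable_comp[OF this measurable_add_dim] show ?thesis
    by (simp add: comp_def)
qed

lemma prod_le_root_prod_fun_upd:
  fixes g :: "nat \<Rightarrow> ('b \<Rightarrow> real) \<Rightarrow> ennreal" and h :: "('b \<Rightarrow> real) \<Rightarrow> ennreal"
  assumes "j \<notin> I" and y: "\<forall>i<k. 0 < y i"
    and hyp: "\<And>x. (\<And>i. i < k \<Longrightarrow> x i \<in> space (PiM (insert j I) (\<lambda>_. lborel)) \<and> (\<forall>l\<in>insert j I. 0 < x i l)) \<Longrightarrow>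
      (\<Prod>i<k. g i (x i)) \<le> h (\<lambda>l\<in>insert j I. root k (\<Prod>i<k. x i l)) ^ k"
    and x: "\<And>i. i < k \<Longrightarrow> x i \<in> space (PiM I (\<lambda>_. lborel)) \<and> (\<forall>l\<in>I. 0 < x i l)"
  shows "(\<Prod>i<k. g i ((x i)(j := y i))) \<le> h ((\<lambda>l\<in>I. root k (\<Prod>i<k. x i l))(j := root k (\<Prod>i<k. y i))) ^ k"
proof -
  have "(x i)(j := y i) \<in> space (PiM (insert j I) (\<lambda>_. lborel)) \<and> (\<forall>l\<in>insert j I. 0 < ((x i)(j := y i)) l)"
    if "i < k" for i
    using x[OF that] y that \<open>j \<notin> I\<close> by (auto simp: space_PiM PiE_def extensional_def)
  then have "(\<Prod>i<k. g i ((x i)(j := y i))) \<le> h (\<lambda>l\<in>insert j I. root k (\<Prod>i<k. ((x i)(j := y i)) l)) ^ k"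
    by (rule hyp)
  also have "(\<lambda>l\<in>insert j I. root k (\<Prod>i<k. ((x i)(j := y i)) l))
      = (\<lambda>l\<in>I. root k (\<Prod>i<k. x i l))(j := root k (\<Prod>i<k. y i))"
    using \<open>j \<notin> I\<close> by (auto simp: fun_eq_iff)
  finally show ?thesis .
qed

text \<open>Induction on the number of coordinates: integrating out all coordinates but one, the
  one-dimensional inequality applies to the fibre integrals, and its hypothesis is the
  induction hypothesis for the fibres.\<close>

lemma multiplicative_prekopa_leindler_PiM:
  fixes g :: "nat \<Rightarrow> ('b \<Rightarrow> real) \<Rightarrow> ennreal" and h :: "('b \<Rightarrow> real) \<Rightarrow> ennreal"
  assumes "finite I" and "k \<ge> 1"
    and "\<And>i. i < k \<Longrightarrow> g i \<in> borel_measurable (PiM I (\<lambda>_. lborel))"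
    and "h \<in> borel_measurable (PiM I (\<lambda>_. lborel))"
    and "\<And>x. (\<And>i. i < k \<Longrightarrow> x i \<in> space (PiM I (\<lambda>_. lborel)) \<and> (\<forall>j\<in>I. 0 < x i j)) \<Longrightarrow>
      (\<Prod>i<k. g i (x i)) \<le> h (\<lambda>j\<in>I. root k (\<Prod>i<k. x i j)) ^ k"
  shows "(\<Prod>i<k. \<integral>\<^sup>+y. g i y * coord_indicator {0..} I y \<partial>PiM I (\<lambda>_. lborel))
    \<le> (\<integral>\<^sup>+y. h y * coord_indicator {0<..} I y \<partial>PiM I (\<lambda>_. lborel)) ^ k"
  using assms(1,3-5)
proof (induction I arbitrary: g h rule: finite_induct)
  case empty
  define u :: "'b \<Rightarrow> real" where "u = (\<lambda>_. undefined)"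
  have "(\<lambda>j\<in>{}. root k (\<Prod>i<k. u j)) = u"
    by (simp add: u_def fun_eq_iff)
  then have "(\<Prod>i<k. g i u) \<le> h u ^ k"
    using empty.prems(3)[of "\<lambda>_. u"] by (simp add: PiM_empty u_def)
  then show ?case
    by (simp add: PiM_empty coord_indicator_def u_def nn_integral_count_space_finite)
next
  case (insert j I)
  interpret product_sigma_finite "\<lambda>_. lborel :: real measure"
    by standard
  interpret PiM_I: sigma_finite_measure "PiM I (\<lambda>_. lborel :: real measure)"
    using \<open>finite I\<close> by (rule sigma_finite)
  note [measurable] = \<open>finite I\<close> insert.prems(2)
  define G where "G i t = (\<integral>\<^sup>+x. g i (x(j := t)) * coord_indicator {0..} I x \<partial>PiM I (\<lambda>_. lborel))" for i t
  define H where "H t = (\<integral>\<^sup>+x. h (x(j := t)) * coord_indicator {0<..} I x \<partial>PiM I (\<lambda>_. lborel))" for t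
  have "(\<Prod>i<k. \<integral>\<^sup>+t. G i t * indicator {0..} t \<partial>lborel) \<le> (\<integral>\<^sup>+t. H t * indicator {0<..} t \<partial>lborel) ^ k"
  proof (rule multiplicative_prekopa_leindler_real[OF \<open>k \<ge> 1\<close>])
    show "G i \<in> borel_measurable borel" if "i < k" for i
    proof -
      note insert.prems(1)[OF that, measurable]
      show ?thesis
        unfolding G_def by measurable
    qed
    show "H \<in> borel_measurable borel"
      unfolding H_def by measurable
    fix y :: "nat \<Rightarrow> real"
    assume y: "\<forall>i<k. 0 < y i"
    show "(\<Prod>i<k. G i (y i)) \<le> H (root k (\<Prod>i<k. y i)) ^ k"
      unfolding G_def H_def
    proof (rule insert.IH)
      show "(\<lambda>x. g i (x(j := y i))) \<in> borel_measurable (PiM I (\<lambda>_. lborel))" if "i < k" for i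
        using measurable_comp[OF measurable_fun_upd_PiM insert.prems(1)[OF that]] by (simp add: comp_def)
      show "(\<lambda>x. h (x(j := root k (\<Prod>i<k. y i)))) \<in> borel_measurable (PiM I (\<lambda>_. lborel))"
        using measurable_comp[OF measurable_fun_upd_PiM insert.prems(2)] by (simp add: comp_def)
    qed (rule prod_le_root_prod_fun_upd[where g = g and h = h, OF \<open>j \<notin> I\<close> y insert.prems(3)])
  qed
  then show ?case
    using insert.prems(1,2) insert.hyps
    by (simp add: G_def H_def nn_integral_PiM_insert_coord_indicator)
qed

section \<open>Orthants and coordinate reflections\<close>

definition coord_reflection :: "('a::euclidean_space \<Rightarrow> real) \<Rightarrow> 'a \<Rightarrow> 'a" where
  "coord_reflection \<sigma> x = (\<Sum>b\<in>Basis. (\<sigma> b * (x \<bullet> b)) *\<^sub>R b)"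

abbreviation sign_patterns :: "('a::euclidean_space \<Rightarrow> real) set" where
  "sign_patterns \<equiv> Basis \<rightarrow>\<^sub>E {-1, 1}"

definition closed_orthant :: "'a::euclidean_space set" where
  "closed_orthant = {x. \<forall>b\<in>Basis. 0 \<le> x \<bullet> b}"

definition open_orthant :: "'a::euclidean_space set" where
  "open_orthant = {x. \<forall>b\<in>Basis. 0 < x \<bullet> b}"

lemma finite_sign_patterns: "finite (sign_patterns :: ('a::euclidean_space \<Rightarrow> real) set)"
  by (intro finite_PiE) auto

lemma closed_orthant_borel [measurable]: "closed_orthant \<in> sets borel"
  unfolding closed_orthant_def by measurable

lemma open_orthant_borel [measurable]: "open_orthant \<in> sets borel"
  unfolding open_orthant_def by measurable

lemma inner_coord_reflection: "b \<in> Basis \<Longrightarrow> coord_reflection \<sigma> x \<bullet> b = \<sigma> b * (x \<bullet> b)"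
  unfolding coord_reflection_def by (simp add: inner_sum_left inner_Basis if_distrib cong: if_cong)

lemma coord_reflection_borel [measurable]: "coord_reflection \<sigma> \<in> borel_measurable borel"
  unfolding coord_reflection_def by measurable

lemma norm_coord_reflection:
  assumes "\<sigma> \<in> sign_patterns"
  shows "norm (coord_reflection \<sigma> x) = norm x"
proof -
  have "(coord_reflection \<sigma> x \<bullet> b) * (coord_reflection \<sigma> x \<bullet> b) = (x \<bullet> b) * (x \<bullet> b)" if "b \<in> Basis" for b
  proof -
    have "\<sigma> b = -1 \<or> \<sigma> b = 1"
      using assms that by (auto simp: PiE_iff)
    then show ?thesis
      using that by (auto simp: inner_coord_reflection)
  qed
  then have "(\<Sum>b\<in>Basis. (coord_reflection \<sigma> x \<bullet> b) * (coord_reflection \<sigma> x \<bullet> b)) = (\<Sum>b\<in>Basis. (x \<bullet> b) * (x \<bullet> b))"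
    by (rule sum.cong[OF refl])
  then have "coord_reflection \<sigma> x \<bullet> coord_reflection \<sigma> x = x \<bullet> x"
    by (simp only: euclidean_inner[symmetric])
  then show ?thesis
    by (simp add: norm_eq_sqrt_inner)
qed

lemma nn_integral_coord_reflection:
  fixes F :: "'a::euclidean_space \<Rightarrow> ennreal"
  assumes \<sigma>: "\<sigma> \<in> sign_patterns" and F: "F \<in> borel_measurable lebesgue"
  shows "(\<integral>\<^sup>+x. F (coord_reflection \<sigma> x) \<partial>lebesgue) = (\<integral>\<^sup>+x. F x \<partial>lebesgue)"
proof -
  have nonzero: "\<And>b. b \<in> Basis \<Longrightarrow> \<sigma> b \<noteq> 0"
    using \<sigma> by (auto simp: PiE_def Pi_def)
  have "(\<Prod>b\<in>Basis. \<bar>\<sigma> b\<bar>) = 1"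
    using \<sigma> by (intro prod.neutral) (auto simp: PiE_def Pi_def)
  moreover have "(\<lambda>x. 0 + (\<Sum>b\<in>Basis. (\<sigma> b * (x \<bullet> b)) *\<^sub>R b)) = coord_reflection \<sigma>"
    by (simp add: coord_reflection_def fun_eq_iff)
  ultimately have leb: "lebesgue = density (distr lebesgue lebesgue (coord_reflection \<sigma>)) (\<lambda>_. 1)"
    and meas: "coord_reflection \<sigma> \<in> lebesgue \<rightarrow>\<^sub>M lebesgue"
    using lebesgue_affine_euclidean[of \<sigma> 0, OF nonzero] lebesgue_affine_measurable[of \<sigma> 0, OF nonzero]
    by simp_all
  have "(\<integral>\<^sup>+x. F x \<partial>lebesgue) = (\<integral>\<^sup>+x. F x \<partial>distr lebesgue lebesgue (coord_reflection \<sigma>))"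
    by (subst leb) (simp add: density_1)
  also have "\<dots> = (\<integral>\<^sup>+x. F (coord_reflection \<sigma> x) \<partial>lebesgue)"
    by (rule nn_integral_distr[OF meas]) (use F in simp)
  finally show ?thesis ..
qed

lemma nn_integral_indicator_coord_reflection:
  fixes F :: "'a::euclidean_space \<Rightarrow> ennreal"
  assumes \<sigma>: "\<sigma> \<in> sign_patterns" and F [measurable]: "F \<in> borel_measurable lebesgue"
    and sym: "\<And>\<sigma> x. \<sigma> \<in> sign_patterns \<Longrightarrow> F (coord_reflection \<sigma> x) = F x"
    and [measurable]: "S \<in> sets borel"
  shows "(\<integral>\<^sup>+x. F x * indicator S (coord_reflection \<sigma> x) \<partial>lebesgue) = (\<integral>\<^sup>+x. F x * indicator S x \<partial>lebesgue)"
proof -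
  have "(\<lambda>x. indicator S x :: ennreal) \<in> borel_measurable lebesgue"
    by (intro measurable_completion) measurable
  then have "(\<lambda>x. F x * indicator S x) \<in> borel_measurable lebesgue"
    by measurable
  from nn_integral_coord_reflection[OF \<sigma> this] show ?thesis
    using sym[OF \<sigma>] by simp
qed

lemma borel_measurable_indicator_coord_reflection [measurable]:
  assumes [measurable]: "S \<in> sets borel"
  shows "(\<lambda>x. indicator S (coord_reflection \<sigma> x) :: ennreal) \<in> borel_measurable lebesgue"
  by (intro measurable_completion) measurable

lemma one_le_sum_indicator_closed_orthant:
  "1 \<le> (\<Sum>\<sigma>\<in>sign_patterns. indicator closed_orthant (coord_reflection \<sigma> x) :: ennreal)"
proof -
  define \<sigma> where "\<sigma> = (\<lambda>b\<in>Basis. if 0 \<le> x \<bullet> b then 1 else (-1::real))"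
  have "\<sigma> \<in> sign_patterns" "coord_reflection \<sigma> x \<in> closed_orthant"
    by (auto simp: \<sigma>_def closed_orthant_def inner_coord_reflection)
  then show ?thesis
    using member_le_sum[of \<sigma> sign_patterns "\<lambda>\<sigma>. indicator closed_orthant (coord_reflection \<sigma> x) :: ennreal"]
    by (simp add: finite_sign_patterns)
qed

lemma sum_indicator_open_orthant_le_one:
  "(\<Sum>\<sigma>\<in>sign_patterns. indicator open_orthant (coord_reflection \<sigma> x) :: ennreal) \<le> 1"
proof -
  have "\<sigma> = \<sigma>'" if "\<sigma> \<in> sign_patterns" "coord_reflection \<sigma> x \<in> open_orthant"
    and "\<sigma>' \<in> sign_patterns" "coord_reflection \<sigma>' x \<in> open_orthant" for \<sigma> \<sigma>'
  proof (rule PiE_ext[OF that(1,3)])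
    fix b :: 'a
    assume "b \<in> Basis"
    then have "0 < \<sigma> b * (x \<bullet> b)" "0 < \<sigma>' b * (x \<bullet> b)"
      using that(2,4) by (auto simp: open_orthant_def inner_coord_reflection)
    moreover have "\<sigma> b \<in> {-1, 1}" "\<sigma>' b \<in> {-1, 1}"
      using that(1,3) \<open>b \<in> Basis\<close> by (auto simp: PiE_iff)
    ultimately show "\<sigma> b = \<sigma>' b"
      by (auto simp: zero_less_mult_iff)
  qed
  moreover have "finite {\<sigma> \<in> sign_patterns. coord_reflection \<sigma> x \<in> (open_orthant :: 'a set)}"
    by (rule finite_subset[OF _ finite_sign_patterns]) auto
  ultimately have "card {\<sigma> \<in> sign_patterns. coord_reflection \<sigma> x \<in> (open_orthant :: 'a set)} \<le> Suc 0"
    by (subst card_le_Suc0_iff_eq) auto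
  moreover have "(\<Sum>\<sigma>\<in>sign_patterns. indicator open_orthant (coord_reflection \<sigma> x) :: ennreal)
      = of_nat (card {\<sigma> \<in> sign_patterns. coord_reflection \<sigma> x \<in> (open_orthant :: 'a set)})"
    unfolding indicator_def
    by (subst sum_of_bool_eq[OF finite_sign_patterns]) (simp_all add: Int_def finite_sign_patterns)
  ultimately show ?thesis
    by simp
qed

text \<open>Each point has a reflection in the closed orthant, and at most one in the open orthant;
  integrating over all reflections gives the following two bounds.\<close>

lemma nn_integral_le_closed_orthant:
  fixes F :: "'a::euclidean_space \<Rightarrow> ennreal"
  assumes F [measurable]: "F \<in> borel_measurable lebesgue"
    and sym: "\<And>\<sigma> x. \<sigma> \<in> sign_patterns \<Longrightarrow> F (coord_reflection \<sigma> x) = F x"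
  shows "(\<integral>\<^sup>+x. F x \<partial>lebesgue)
    \<le> of_nat (card (sign_patterns :: ('a \<Rightarrow> real) set)) * (\<integral>\<^sup>+x. F x * indicator closed_orthant x \<partial>lebesgue)"
proof -
  have "F x \<le> (\<Sum>\<sigma>\<in>sign_patterns. F x * indicator closed_orthant (coord_reflection \<sigma> x))" for x
    using mult_left_mono[OF one_le_sum_indicator_closed_orthant[of x], of "F x"]
    by (simp add: sum_distrib_left)
  then have "(\<integral>\<^sup>+x. F x \<partial>lebesgue)
      \<le> (\<integral>\<^sup>+x. (\<Sum>\<sigma>\<in>sign_patterns. F x * indicator closed_orthant (coord_reflection \<sigma> x)) \<partial>lebesgue)"
    by (intro nn_integral_mono)
  also have "\<dots> = (\<Sum>\<sigma>\<in>sign_patterns. \<integral>\<^sup>+x. F x * indicator closed_orthant (coord_reflection \<sigma> x) \<partial>lebesgue)"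
    by (intro nn_integral_sum) measurable
  also have "\<dots> = (\<Sum>\<sigma>\<in>(sign_patterns :: ('a \<Rightarrow> real) set). \<integral>\<^sup>+x. F x * indicator closed_orthant x \<partial>lebesgue)"
    using F sym by (intro sum.cong nn_integral_indicator_coord_reflection) auto
  finally show ?thesis
    by simp
qed

lemma open_orthant_le_nn_integral:
  fixes F :: "'a::euclidean_space \<Rightarrow> ennreal"
  assumes F [measurable]: "F \<in> borel_measurable lebesgue"
    and sym: "\<And>\<sigma> x. \<sigma> \<in> sign_patterns \<Longrightarrow> F (coord_reflection \<sigma> x) = F x"
  shows "of_nat (card (sign_patterns :: ('a \<Rightarrow> real) set)) * (\<integral>\<^sup>+x. F x * indicator open_orthant x \<partial>lebesgue)
    \<le> (\<integral>\<^sup>+x. F x \<partial>lebesgue)"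
proof -
  have "of_nat (card (sign_patterns :: ('a \<Rightarrow> real) set)) * (\<integral>\<^sup>+x. F x * indicator open_orthant x \<partial>lebesgue)
      = (\<Sum>\<sigma>\<in>sign_patterns. \<integral>\<^sup>+x. F x * indicator open_orthant (coord_reflection \<sigma> x) \<partial>lebesgue)"
    using F sym by (simp add: nn_integral_indicator_coord_reflection)
  also have "\<dots> = (\<integral>\<^sup>+x. (\<Sum>\<sigma>\<in>sign_patterns. F x * indicator open_orthant (coord_reflection \<sigma> x)) \<partial>lebesgue)"
    by (intro nn_integral_sum[symmetric]) measurable
  also have "\<dots> \<le> (\<integral>\<^sup>+x. F x \<partial>lebesgue)"
  proof (intro nn_integral_mono)
    fix x
    show "(\<Sum>\<sigma>\<in>sign_patterns. F x * indicator open_orthant (coord_reflection \<sigma> x)) \<le> F x"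
      using mult_left_mono[OF sum_indicator_open_orthant_le_one[of x], of "F x"]
      by (simp add: sum_distrib_left)
  qed
  finally show ?thesis .
qed

definition vector_of_coords :: "('a::euclidean_space \<Rightarrow> real) \<Rightarrow> 'a" where
  "vector_of_coords y = (\<Sum>b\<in>Basis. y b *\<^sub>R b)"

lemma inner_vector_of_coords: "b \<in> Basis \<Longrightarrow> vector_of_coords y \<bullet> b = y b"
  unfolding vector_of_coords_def by (simp add: inner_sum_left inner_Basis if_distrib cong: if_cong)

lemma vector_of_coords_measurable [measurable]:
  "(vector_of_coords :: ('a::euclidean_space \<Rightarrow> real) \<Rightarrow> 'a) \<in> PiM Basis (\<lambda>_. lborel) \<rightarrow>\<^sub>M borel"
  unfolding vector_of_coords_def by measurable

lemma nn_integral_lborel_eq_PiM: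
  fixes F :: "'a::euclidean_space \<Rightarrow> ennreal"
  assumes [measurable]: "F \<in> borel_measurable borel"
  shows "(\<integral>\<^sup>+x. F x \<partial>lborel) = (\<integral>\<^sup>+y. F (vector_of_coords y) \<partial>PiM Basis (\<lambda>_. lborel))"
proof -
  have "(\<integral>\<^sup>+x. F x \<partial>lborel)
      = (\<integral>\<^sup>+x. F x \<partial>distr (PiM Basis (\<lambda>_. lborel)) borel (vector_of_coords :: ('a \<Rightarrow> real) \<Rightarrow> 'a))"
    unfolding vector_of_coords_def by (subst lborel_eq) (rule refl)
  also have "\<dots> = (\<integral>\<^sup>+y. F (vector_of_coords y) \<partial>PiM Basis (\<lambda>_. lborel))"
    by (rule nn_integral_distr) measurable
  finally show ?thesis .
qed

lemma coord_indicator_Basis: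
  "coord_indicator S Basis y = indicator {x. \<forall>b\<in>Basis. x \<bullet> b \<in> S} (vector_of_coords y :: 'a::euclidean_space)"
proof (cases "\<forall>b\<in>(Basis :: 'a set). y b \<in> S")
  case True
  then show ?thesis
    by (simp add: coord_indicator_def inner_vector_of_coords)
next
  case False
  then obtain b :: 'a where "b \<in> Basis" "y b \<notin> S"
    by blast
  then have "(\<Prod>j\<in>(Basis :: 'a set). indicator S (y j) :: ennreal) = 0"
    by (intro prod_zero) (auto intro!: bexI[of _ b])
  with False show ?thesis
    by (simp add: coord_indicator_def inner_vector_of_coords)
qed

lemma lebesgue_measurable_borel_minorant:
  fixes F :: "'a::euclidean_space \<Rightarrow> ennreal"
  assumes "F \<in> borel_measurable lebesgue"
  obtains g where "g \<in> borel_measurable borel" "\<And>x. g x \<le> F x"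
    "(\<integral>\<^sup>+x. g x \<partial>lborel) = (\<integral>\<^sup>+x. F x \<partial>lebesgue)"
proof -
  obtain g' where [measurable]: "g' \<in> borel_measurable lborel" and ae: "AE x in lborel. F x = g' x"
    using completion_ex_borel_measurable[OF assms] by blast
  then obtain N where N: "{x \<in> space lborel. F x \<noteq> g' x} \<subseteq> N" "N \<in> null_sets lborel"
    by (auto elim!: AE_E simp: null_sets_def)
  then have [measurable]: "N \<in> sets borel"
    by auto
  define g where "g x = (if x \<in> N then 0 else g' x)" for x
  have "g \<in> borel_measurable borel"
    unfolding g_def by measurable
  moreover have "g x \<le> F x" for x
  proof (cases "x \<in> N")
    case False
    then have "F x = g' x"
      using N(1) by auto
    with False show ?thesis
      by (simp add: g_def)
  qed (simp add: g_def)
  moreover have "(\<integral>\<^sup>+x. g x \<partial>lborel) = (\<integral>\<^sup>+x. F x \<partial>lebesgue)"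
  proof -
    have "AE x in lborel. g x = F x"
      using AE_not_in[OF N(2)] ae by eventually_elim (simp add: g_def)
    then have "(\<integral>\<^sup>+x. g x \<partial>lborel) = (\<integral>\<^sup>+x. F x \<partial>lborel)"
      by (rule nn_integral_cong_AE)
    then show ?thesis
      by (simp add: nn_integral_completion)
  qed
  ultimately show ?thesis
    using that by blast
qed

lemma Basis_vec_iff_axis: "(b :: real ^ 'n) \<in> Basis \<longleftrightarrow> (\<exists>j. b = axis j 1)"
  by (auto simp: Basis_vec_def)

lemma nonneg_orthant_eq_closed_orthant: "nonneg_orthant = (closed_orthant :: (real ^ 'n) set)"
  by (simp add: nonneg_orthant_def closed_orthant_def Basis_vec_def cart_eq_inner_axis)

lemma unconditional_coord_reflection:
  fixes f :: "real ^ 'n \<Rightarrow> real"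
  assumes "unconditional f" and "\<sigma> \<in> sign_patterns"
  shows "f (coord_reflection \<sigma> x) = f x"
proof -
  have axis_Basis: "axis j 1 \<in> (Basis :: (real ^ 'n) set)" for j
    unfolding Basis_vec_iff_axis by blast
  have "coord_reflection \<sigma> x $ j = \<sigma> (axis j 1) * x $ j" for j
    using inner_coord_reflection[OF axis_Basis, of \<sigma> x j] by (simp add: cart_eq_inner_axis)
  then have "coord_reflection \<sigma> x = (\<chi> j. \<sigma> (axis j 1) * x $ j)"
    by (simp add: vec_eq_iff)
  moreover have "\<forall>j. \<sigma> (axis j 1) \<in> {-1, 1}"
    using \<open>\<sigma> \<in> sign_patterns\<close> axis_Basis by (auto simp: PiE_iff)
  ultimately show ?thesis
    using \<open>unconditional f\<close> unfolding unconditional_def by simp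
qed

section \<open>Pairwise products and the geometric mean\<close>

lemma prod_pairs_mult_prod:
  fixes a :: "nat \<Rightarrow> 'a::comm_monoid_mult"
  shows "(\<Prod>j<k. \<Prod>i<j. a i * a j) * (\<Prod>i<k. a i) = (\<Prod>i<k. a i) ^ k"
proof (induction k)
  case (Suc k)
  have "(\<Prod>i<k. a i * a k) = (\<Prod>i<k. a i) * a k ^ k"
    by (simp add: prod.distrib)
  then have "(\<Prod>j<Suc k. \<Prod>i<j. a i * a j) * (\<Prod>i<Suc k. a i)
      = ((\<Prod>j<k. \<Prod>i<j. a i * a j) * (\<Prod>i<k. a i)) * ((\<Prod>i<k. a i) * a k ^ k * a k)"
    by (simp add: ac_simps)
  also have "\<dots> = (\<Prod>i<Suc k. a i) ^ Suc k"
    unfolding Suc.IH by (simp add: power_mult_distrib ac_simps)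
  finally show ?case .
qed simp

lemma card_pairs_less: "real (card (SIGMA j:{..<k}. {..<j})) = real k * (real k - 1) / 2"
proof -
  have "real (\<Sum>j<k. j) = real k * (real k - 1) / 2"
    by (induction k) (simp_all add: field_simps)
  then show ?thesis
    by simp
qed

text \<open>AM--GM over the \<open>k(k-1)/2\<close> pairs: every \<open>a i\<close> occurs in \<open>k - 1\<close> of them.\<close>

lemma sum_pairs_ge_root_prod:
  fixes a :: "nat \<Rightarrow> real"
  assumes "k \<ge> 2" and a: "\<And>i. i < k \<Longrightarrow> 0 < a i"
  shows "real k * (real k - 1) / 2 * (root k (\<Prod>i<k. a i))\<^sup>2 \<le> (\<Sum>j<k. \<Sum>i<j. a i * a j)"
proof -
  define S where "S = (SIGMA j:{..<k}. {..<j})"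
  define P where "P = (\<Prod>i<k. a i)"
  define c where "c = real k * (real k - 1) / 2"
  have "P > 0"
    unfolding P_def using a by (intro prod_pos) auto
  have "c > 0"
    using \<open>k \<ge> 2\<close> by (simp add: c_def)
  have "(1, 0) \<in> S"
    using \<open>k \<ge> 2\<close> by (auto simp: S_def)
  then have am: "(\<Prod>p\<in>S. a (snd p) * a (fst p)) powr (1 / card S) \<le> (\<Sum>p\<in>S. a (snd p) * a (fst p) / card S)"
    using a by (intro arith_geom_mean) (auto simp: S_def less_imp_le)
  have card_S: "real (card S) = c"
    unfolding S_def c_def by (rule card_pairs_less)
  have sum_S: "(\<Sum>p\<in>S. a (snd p) * a (fst p)) = (\<Sum>j<k. \<Sum>i<j. a i * a j)"
    unfolding S_def by (subst sum.Sigma) (auto simp: split_def)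
  have prod_S: "(\<Prod>p\<in>S. a (snd p) * a (fst p)) = P ^ (k - 1)"
  proof -
    have "(\<Prod>p\<in>S. a (snd p) * a (fst p)) = (\<Prod>j<k. \<Prod>i<j. a i * a j)"
      unfolding S_def by (subst prod.Sigma) (auto simp: split_def)
    then have "(\<Prod>p\<in>S. a (snd p) * a (fst p)) * P = P ^ k"
      using prod_pairs_mult_prod[of a k] by (simp add: P_def)
    also have "\<dots> = P ^ (k - 1) * P"
      using \<open>k \<ge> 2\<close> by (simp flip: power_Suc2)
    finally have "(\<Prod>p\<in>S. a (snd p) * a (fst p)) * P = P ^ (k - 1) * P" .
    then show ?thesis
      using \<open>P > 0\<close> by simp
  qed
  have "(P ^ (k - 1)) powr (1 / c) \<le> (\<Sum>j<k. \<Sum>i<j. a i * a j) / c"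
    using am unfolding sum_divide_distrib[symmetric] sum_S prod_S card_S .
  moreover have "(P ^ (k - 1)) powr (1 / c) = (root k P)\<^sup>2"
  proof -
    have "real (k - 1) * (1 / c) = 2 / real k"
      using \<open>k \<ge> 2\<close> by (simp add: c_def field_simps)
    then have "(P ^ (k - 1)) powr (1 / c) = P powr (2 / real k)"
      using \<open>P > 0\<close> by (simp add: powr_powr flip: powr_realpow)
    also have "\<dots> = (root k P)\<^sup>2"
      using \<open>k \<ge> 2\<close> \<open>P > 0\<close> by (simp add: root_powr_inverse powr_power)
    finally show ?thesis .
  qed
  ultimately show ?thesis
    using \<open>c > 0\<close> by (simp add: P_def c_def pos_le_divide_eq mult.commute)
qed

lemma sum_pairs_inner_ge_geometric_mean:
  fixes X :: "nat \<Rightarrow> 'a::euclidean_space"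
  assumes "k \<ge> 2" and X: "\<And>i. i < k \<Longrightarrow> X i \<in> open_orthant"
  shows "real k * (real k - 1) / 2 * (norm (vector_of_coords (\<lambda>b. root k (\<Prod>i<k. X i \<bullet> b)) :: 'a))\<^sup>2
    \<le> (\<Sum>j<k. \<Sum>i<j. X i \<bullet> X j)"
proof -
  define c where "c = real k * (real k - 1) / 2"
  have norm2: "(norm v)\<^sup>2 = (\<Sum>b\<in>Basis. (v \<bullet> b) * (v \<bullet> b))" for v :: 'a
    by (simp only: power2_norm_eq_inner) (rule euclidean_inner)
  have "c * (norm (vector_of_coords (\<lambda>b. root k (\<Prod>i<k. X i \<bullet> b)) :: 'a))\<^sup>2
      = (\<Sum>b\<in>Basis. c * (root k (\<Prod>i<k. X i \<bullet> b))\<^sup>2)"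
    unfolding norm2 by (simp add: inner_vector_of_coords sum_distrib_left power2_eq_square)
  also have "\<dots> \<le> (\<Sum>b\<in>Basis. \<Sum>j<k. \<Sum>i<j. (X i \<bullet> b) * (X j \<bullet> b))"
    unfolding c_def
    using X \<open>k \<ge> 2\<close> by (intro sum_mono sum_pairs_ge_root_prod) (auto simp: open_orthant_def)
  also have "\<dots> = (\<Sum>j<k. \<Sum>b\<in>Basis. \<Sum>i<j. (X i \<bullet> b) * (X j \<bullet> b))"
    by (rule sum.swap)
  also have "\<dots> = (\<Sum>j<k. \<Sum>i<j. \<Sum>b\<in>Basis. (X i \<bullet> b) * (X j \<bullet> b))"
    by (rule sum.cong[OF refl]) (rule sum.swap)
  also have "\<dots> = (\<Sum>j<k. \<Sum>i<j. X i \<bullet> X j)"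
    by (simp only: euclidean_inner[symmetric])
  finally show ?thesis
    by (simp add: c_def)
qed

section \<open>Reduction to the orthant\<close>

lemma nn_integral_orthant_eq_PiM:
  fixes F :: "'a::euclidean_space \<Rightarrow> ennreal"
  assumes [measurable]: "F \<in> borel_measurable borel" "S \<in> sets borel"
  shows "(\<integral>\<^sup>+x. F x * indicator {x. \<forall>b\<in>Basis. x \<bullet> b \<in> S} x \<partial>lborel)
    = (\<integral>\<^sup>+y. F (vector_of_coords y) * coord_indicator S Basis y \<partial>PiM Basis (\<lambda>_. lborel))"
proof -
  have "{x::'a. \<forall>b\<in>Basis. x \<bullet> b \<in> S} \<in> sets borel"
    by measurable
  then show ?thesis
    by (subst nn_integral_lborel_eq_PiM) (auto simp: coord_indicator_Basis)
qed

lemma unconditional_nn_integral_le_PiM: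
  fixes f :: "real ^ 'n \<Rightarrow> real"
  assumes f_meas: "f \<in> borel_measurable lebesgue" and "unconditional f"
  obtains g where "g \<in> borel_measurable borel" "\<And>x. g x \<le> ennreal (f x)"
    "(\<integral>\<^sup>+x. ennreal (f x) \<partial>lebesgue)
      \<le> of_nat (card (sign_patterns :: (real ^ 'n \<Rightarrow> real) set)) *
        (\<integral>\<^sup>+y. g (vector_of_coords y) * coord_indicator {0..} Basis y \<partial>PiM Basis (\<lambda>_. lborel))"
proof -
  define F where "F x = ennreal (f x) * indicator closed_orthant x" for x
  have [measurable]: "(\<lambda>x. indicator closed_orthant x :: ennreal) \<in> borel_measurable (lebesgue :: (real ^ 'n) measure)"
    by (intro measurable_completion) measurable
  have "F \<in> borel_measurable lebesgue"
    using f_meas unfolding F_def by measurable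
  then obtain g where g: "g \<in> borel_measurable borel" "\<And>x. g x \<le> F x"
    and int_g: "(\<integral>\<^sup>+x. g x \<partial>lborel) = (\<integral>\<^sup>+x. F x \<partial>lebesgue)"
    using lebesgue_measurable_borel_minorant by metis
  have "g x = g x * indicator closed_orthant x" for x
    using g(2)[of x] by (auto simp: F_def indicator_def)
  then have "(\<integral>\<^sup>+x. F x \<partial>lebesgue)
      = (\<integral>\<^sup>+y. g (vector_of_coords y) * coord_indicator {0..} Basis y \<partial>PiM Basis (\<lambda>_. lborel))"
    using nn_integral_orthant_eq_PiM[OF g(1), of "{0..}"] int_g
    by (simp add: closed_orthant_def[symmetric])
  moreover have "(\<integral>\<^sup>+x. ennreal (f x) \<partial>lebesgue)
      \<le> of_nat (card (sign_patterns :: (real ^ 'n \<Rightarrow> real) set)) * (\<integral>\<^sup>+x. F x \<partial>lebesgue)"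
    unfolding F_def using f_meas \<open>unconditional f\<close>
    by (intro nn_integral_le_closed_orthant) (auto simp: unconditional_coord_reflection)
  moreover have "g x \<le> ennreal (f x)" for x
    using g(2)[of x] by (cases "x \<in> closed_orthant") (simp_all add: F_def)
  ultimately show ?thesis
    using that g(1) by simp
qed

lemma PiM_open_orthant_le_nn_integral:
  fixes h :: "'a::euclidean_space \<Rightarrow> ennreal"
  assumes [measurable]: "h \<in> borel_measurable borel"
    and sym: "\<And>\<sigma> x. \<sigma> \<in> sign_patterns \<Longrightarrow> h (coord_reflection \<sigma> x) = h x"
  shows "of_nat (card (sign_patterns :: ('a \<Rightarrow> real) set)) *
      (\<integral>\<^sup>+y. h (vector_of_coords y) * coord_indicator {0<..} Basis y \<partial>PiM Basis (\<lambda>_. lborel))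
    \<le> (\<integral>\<^sup>+x. h x \<partial>lebesgue)"
proof -
  have "(\<integral>\<^sup>+y. h (vector_of_coords y) * coord_indicator {0<..} Basis y \<partial>PiM Basis (\<lambda>_. lborel))
      = (\<integral>\<^sup>+x. h x * indicator open_orthant x \<partial>lebesgue)"
    using nn_integral_orthant_eq_PiM[of h "{0<..}"]
    by (simp add: open_orthant_def[symmetric] nn_integral_completion)
  moreover have "h \<in> borel_measurable lebesgue"
    by (intro measurable_completion) measurable
  ultimately show ?thesis
    using open_orthant_le_nn_integral[of h] sym by simp
qed

lemma borel_measurable_radial_antimono:
  fixes \<rho> :: "real \<Rightarrow> real"
  assumes "\<And>s t. 0 \<le> s \<Longrightarrow> s \<le> t \<Longrightarrow> \<rho> t \<le> \<rho> s" and "c \<ge> 0"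
  shows "(\<lambda>u::'a::real_normed_vector. ennreal (\<rho> (c * (norm u)\<^sup>2) powr r)) \<in> borel_measurable borel"
proof -
  have "mono (\<lambda>t. - \<rho> (max 0 t))"
    using assms(1) by (auto simp: mono_def max_def)
  then have [measurable]: "(\<lambda>t. - \<rho> (max 0 t)) \<in> borel_measurable borel"
    by (rule borel_measurable_mono)
  have "(\<lambda>u::'a. c * (norm u)\<^sup>2) \<in> borel_measurable borel"
    by measurable
  from measurable_compose[OF this \<open>(\<lambda>t. - \<rho> (max 0 t)) \<in> _\<close>]
  have [measurable]: "(\<lambda>u::'a. - \<rho> (max 0 (c * (norm u)\<^sup>2))) \<in> borel_measurable borel" .
  have "(\<lambda>u::'a. ennreal ((- (- \<rho> (max 0 (c * (norm u)\<^sup>2)))) powr r)) \<in> borel_measurable borel"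
    by measurable
  then show ?thesis
    using \<open>c \<ge> 0\<close> by simp
qed

lemma prod_le_radial_at_geometric_mean:
  fixes f :: "nat \<Rightarrow> real ^ 'n \<Rightarrow> real" and g :: "nat \<Rightarrow> real ^ 'n \<Rightarrow> ennreal"
    and \<rho> :: "real \<Rightarrow> real" and x :: "nat \<Rightarrow> real ^ 'n \<Rightarrow> real"
  assumes "k \<ge> 2"
    and nonneg: "\<And>i x. i < k \<Longrightarrow> 0 \<le> f i x"
    and \<rho>_pos: "\<And>t. 0 \<le> t \<Longrightarrow> 0 < \<rho> t"
    and \<rho>_antimono: "\<And>s t. 0 \<le> s \<Longrightarrow> s \<le> t \<Longrightarrow> \<rho> t \<le> \<rho> s"
    and hyp: "\<And>x. \<forall>i<k. x i \<in> nonneg_orthant \<Longrightarrow> (\<Prod>i<k. f i (x i)) \<le> \<rho> (pair_inner_sum k x)"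
    and g_le: "\<And>i y. i < k \<Longrightarrow> g i y \<le> ennreal (f i y)"
    and x: "\<And>i. i < k \<Longrightarrow> \<forall>j\<in>Basis. 0 < x i j"
  shows "(\<Prod>i<k. g i (vector_of_coords (x i)))
    \<le> ennreal (\<rho> (real k * (real k - 1) / 2 * (norm (vector_of_coords (\<lambda>j\<in>Basis. root k (\<Prod>i<k. x i j)) :: real ^ 'n))\<^sup>2)
        powr (1 / real k)) ^ k"
proof -
  define X where "X i = (vector_of_coords (x i) :: real ^ 'n)" for i
  define G where "G = (vector_of_coords (\<lambda>j\<in>Basis. root k (\<Prod>i<k. x i j)) :: real ^ 'n)"
  define c where "c = real k * (real k - 1) / 2"
  have X: "X i \<in> open_orthant" if "i < k" for i
    using x[OF that] by (simp add: X_def open_orthant_def inner_vector_of_coords)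
  then have "\<forall>i<k. X i \<in> nonneg_orthant"
    by (auto simp: nonneg_orthant_eq_closed_orthant closed_orthant_def open_orthant_def less_imp_le)
  have "G = vector_of_coords (\<lambda>b. root k (\<Prod>i<k. X i \<bullet> b))"
    unfolding G_def vector_of_coords_def X_def by (intro sum.cong) (simp_all add: inner_vector_of_coords)
  then have "c * (norm G)\<^sup>2 \<le> pair_inner_sum k X"
    unfolding pair_inner_sum_def c_def by (simp only:) (rule sum_pairs_inner_ge_geometric_mean[OF \<open>k \<ge> 2\<close> X])
  then have "\<rho> (pair_inner_sum k X) \<le> \<rho> (c * (norm G)\<^sup>2)"
    using \<open>k \<ge> 2\<close> by (intro \<rho>_antimono) (simp_all add: c_def)
  then have f_le: "(\<Prod>i<k. f i (X i)) \<le> \<rho> (c * (norm G)\<^sup>2)"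
    using hyp[OF \<open>\<forall>i<k. X i \<in> nonneg_orthant\<close>] by simp
  have "(\<Prod>i<k. g i (X i)) \<le> (\<Prod>i<k. ennreal (f i (X i)))"
    using g_le by (intro prod_mono_ennreal) auto
  also have "\<dots> = ennreal (\<Prod>i<k. f i (X i))"
    using nonneg by (intro prod_ennreal) auto
  also have "\<dots> \<le> ennreal (\<rho> (c * (norm G)\<^sup>2))"
    using f_le by (rule ennreal_leI)
  also have "\<rho> (c * (norm G)\<^sup>2) = (\<rho> (c * (norm G)\<^sup>2) powr (1 / real k)) ^ k"
    using \<rho>_pos[of "c * (norm G)\<^sup>2"] \<open>k \<ge> 2\<close> by (simp add: c_def powr_realpow[symmetric] powr_powr)
  finally show ?thesis
    by (simp add: X_def G_def c_def ennreal_power)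
qed

lemma prod_nn_integral_le_radial:
  fixes k :: nat and f :: "nat \<Rightarrow> real ^ 'n \<Rightarrow> real" and \<rho> :: "real \<Rightarrow> real"
  assumes "k \<ge> 2"
    and nonneg: "\<And>i x. i < k \<Longrightarrow> 0 \<le> f i x"
    and meas: "\<And>i. i < k \<Longrightarrow> f i \<in> borel_measurable lebesgue"
    and uncond: "\<And>i. i < k \<Longrightarrow> unconditional (f i)"
    and \<rho>_pos: "\<And>t. 0 \<le> t \<Longrightarrow> 0 < \<rho> t"
    and \<rho>_antimono: "\<And>s t. 0 \<le> s \<Longrightarrow> s \<le> t \<Longrightarrow> \<rho> t \<le> \<rho> s"
    and hyp: "\<And>x. \<forall>i<k. x i \<in> nonneg_orthant \<Longrightarrow> (\<Prod>i<k. f i (x i)) \<le> \<rho> (pair_inner_sum k x)"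
  shows "(\<Prod>i<k. \<integral>\<^sup>+y. ennreal (f i y) \<partial>lebesgue)
    \<le> (\<integral>\<^sup>+(u :: real ^ 'n). ennreal (\<rho> (real k * (real k - 1) / 2 * (norm u)\<^sup>2) powr (1 / real k))
      \<partial>lebesgue) ^ k"
proof -
  define h where "h u = ennreal (\<rho> (real k * (real k - 1) / 2 * (norm u)\<^sup>2) powr (1 / real k))"
    for u :: "real ^ 'n"
  define K where "K = (of_nat (card (sign_patterns :: (real ^ 'n \<Rightarrow> real) set)) :: ennreal)"
  define PiM_int where "PiM_int F S = (\<integral>\<^sup>+y. F (vector_of_coords y) * coord_indicator S Basis y \<partial>PiM Basis (\<lambda>_. lborel))"
    for F :: "real ^ 'n \<Rightarrow> ennreal" and S
  have [measurable]: "h \<in> borel_measurable borel"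
    unfolding h_def using \<rho>_antimono \<open>k \<ge> 2\<close> by (intro borel_measurable_radial_antimono) auto
  have "\<forall>i\<in>{..<k}. \<exists>g. g \<in> borel_measurable borel \<and> (\<forall>x. g x \<le> ennreal (f i x)) \<and>
      (\<integral>\<^sup>+x. ennreal (f i x) \<partial>lebesgue) \<le> K * PiM_int g {0..}"
    using unconditional_nn_integral_le_PiM[OF meas uncond] unfolding K_def PiM_int_def by blast
  from bchoice[OF this] obtain g where "\<forall>i\<in>{..<k}. g i \<in> borel_measurable borel \<and>
      (\<forall>x. g i x \<le> ennreal (f i x)) \<and> (\<integral>\<^sup>+x. ennreal (f i x) \<partial>lebesgue) \<le> K * PiM_int (g i) {0..}"
    by blast
  then have g_meas: "\<And>i. i < k \<Longrightarrow> g i \<in> borel_measurable borel"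
    and g_le: "\<And>i x. i < k \<Longrightarrow> g i x \<le> ennreal (f i x)"
    and int_f: "\<And>i. i < k \<Longrightarrow> (\<integral>\<^sup>+x. ennreal (f i x) \<partial>lebesgue) \<le> K * PiM_int (g i) {0..}"
    by auto
  have PL: "(\<Prod>i<k. PiM_int (g i) {0..}) \<le> PiM_int h {0<..} ^ k"
    unfolding PiM_int_def
  proof (rule multiplicative_prekopa_leindler_PiM)
    show "(\<lambda>y. g i (vector_of_coords y)) \<in> borel_measurable (PiM Basis (\<lambda>_. lborel))" if "i < k" for i
      using g_meas[OF that] by measurable
    show "(\<lambda>y. h (vector_of_coords y)) \<in> borel_measurable (PiM Basis (\<lambda>_. lborel))"
      by measurable
    show "(\<Prod>i<k. g i (vector_of_coords (x i))) \<le> h (vector_of_coords (\<lambda>j\<in>Basis. root k (\<Prod>i<k. x i j))) ^ k"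
      if "\<And>i. i < k \<Longrightarrow> x i \<in> space (PiM Basis (\<lambda>_. lborel)) \<and> (\<forall>j\<in>Basis. 0 < x i j)" for x
      unfolding h_def using that
      by (intro prod_le_radial_at_geometric_mean[where f = f and \<rho> = \<rho> and g = g,
          OF \<open>k \<ge> 2\<close> nonneg \<rho>_pos \<rho>_antimono hyp g_le]) auto
  qed (use \<open>k \<ge> 2\<close> in simp_all)
  have "(\<Prod>i<k. \<integral>\<^sup>+y. ennreal (f i y) \<partial>lebesgue) \<le> (\<Prod>i<k. K * PiM_int (g i) {0..})"
    using int_f by (intro prod_mono_ennreal) auto
  also have "\<dots> = K ^ k * (\<Prod>i<k. PiM_int (g i) {0..})"
    by (simp add: prod.distrib)
  also have "\<dots> \<le> (K * PiM_int h {0<..}) ^ k"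
    using mult_left_mono[OF PL, of "K ^ k"] by (simp add: power_mult_distrib)
  also have "K * PiM_int h {0<..} \<le> (\<integral>\<^sup>+u. h u \<partial>lebesgue)"
    unfolding K_def PiM_int_def
  proof (rule PiM_open_orthant_le_nn_integral)
    show "h \<in> borel_measurable borel"
      by measurable
    show "h (coord_reflection \<sigma> u) = h u" if "\<sigma> \<in> sign_patterns" for \<sigma> u
      using norm_coord_reflection[OF that] by (simp add: h_def)
  qed
  finally show ?thesis
    by (simp add: h_def power_mono)
qed

lemma prod_nn_integral_le_gaussian:
  fixes k :: nat and f :: "nat \<Rightarrow> real ^ 'n \<Rightarrow> real" and \<alpha> :: real
  assumes "k \<ge> 2"
    and nonneg: "\<And>i x. i < k \<Longrightarrow> 0 \<le> f i x"
    and meas: "\<And>i. i < k \<Longrightarrow> f i \<in> borel_measurable lebesgue"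
    and uncond: "\<And>i. i < k \<Longrightarrow> unconditional (f i)"
    and "0 \<le> \<alpha>"
    and hyp: "\<And>x. \<forall>i<k. x i \<in> nonneg_orthant \<Longrightarrow> (\<Prod>i<k. f i (x i)) \<le> exp (- \<alpha> * pair_inner_sum k x)"
  shows "(\<Prod>i<k. \<integral>\<^sup>+y. ennreal (f i y) \<partial>lebesgue)
    \<le> (\<integral>\<^sup>+(u :: real ^ 'n). ennreal (exp (- \<alpha> * ((real k - 1) / 2) * (norm u)\<^sup>2)) \<partial>lebesgue) ^ k"
proof (cases "\<alpha> = 0")
  case True
  have "(\<integral>\<^sup>+(u :: real ^ 'n). ennreal (exp (- \<alpha> * ((real k - 1) / 2) * (norm u)\<^sup>2)) \<partial>lebesgue) = \<infinity>"
    using True by (simp add: nn_integral_completion)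
  then show ?thesis
    using \<open>k \<ge> 2\<close> by (simp add: power_eq_top_ennreal)
next
  case False
  have "exp (- \<alpha> * (real k * (real k - 1) / 2 * (norm u)\<^sup>2)) powr (1 / real k)
      = exp (- \<alpha> * ((real k - 1) / 2) * (norm u)\<^sup>2)" for u :: "real ^ 'n"
    using \<open>k \<ge> 2\<close> by (simp add: powr_def field_simps)
  moreover have "(\<Prod>i<k. \<integral>\<^sup>+y. ennreal (f i y) \<partial>lebesgue)
      \<le> (\<integral>\<^sup>+(u :: real ^ 'n). ennreal (exp (- \<alpha> * (real k * (real k - 1) / 2 * (norm u)\<^sup>2)) powr (1 / real k))
        \<partial>lebesgue) ^ k"
    using \<open>0 \<le> \<alpha>\<close> False hyp
    by (intro prod_nn_integral_le_radial[OF \<open>k \<ge> 2\<close> nonneg meas uncond]) auto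
  ultimately show ?thesis
    by simp
qed

theorem mainTheorem3:
  fixes k :: nat and f :: "nat \<Rightarrow> real ^ 'n \<Rightarrow> real"
  assumes k: "k \<ge> 2"
    and nonneg: "\<And>i x. i < k \<Longrightarrow> 0 \<le> f i x"
    and meas: "\<And>i. i < k \<Longrightarrow> f i \<in> borel_measurable lebesgue"
    and uncond: "\<And>i. i < k \<Longrightarrow> unconditional (f i)"
    and integr: "\<And>i. i < k \<Longrightarrow> integrable lebesgue (f i)"
  shows
    "(\<forall>\<rho> :: real \<Rightarrow> real.
        (\<forall>t. 0 \<le> t \<longrightarrow> 0 < \<rho> t) \<and>
        (\<forall>s t. 0 \<le> s \<and> s \<le> t \<longrightarrow> \<rho> t \<le> \<rho> s) \<and>
        (\<integral>\<^sup>+ t. ennreal (\<rho> (t\<^sup>2) powr (1 / real k)) \<partial>lborel) < \<infinity> \<and>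
        (\<forall>x :: nat \<Rightarrow> real ^ 'n. (\<forall>i<k. x i \<in> nonneg_orthant) \<longrightarrow>
            (\<Prod>i<k. f i (x i)) \<le> \<rho> (pair_inner_sum k x))
      \<longrightarrow>
        (\<Prod>i<k. \<integral>\<^sup>+ y. ennreal (f i y) \<partial>lebesgue)
          \<le> (\<integral>\<^sup>+ (u :: real ^ 'n). ennreal (\<rho> (real k * (real k - 1) / 2 * (norm u)\<^sup>2) powr (1 / real k))
                \<partial>lebesgue) ^ k)
     \<and>
     (\<forall>\<alpha> :: real. 0 \<le> \<alpha> \<and>
        (\<forall>x :: nat \<Rightarrow> real ^ 'n. (\<forall>i<k. x i \<in> nonneg_orthant) \<longrightarrow>
            (\<Prod>i<k. f i (x i)) \<le> exp (- \<alpha> * pair_inner_sum k x))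
      \<longrightarrow>
        (\<Prod>i<k. \<integral>\<^sup>+ y. ennreal (f i y) \<partial>lebesgue)
          \<le> (\<integral>\<^sup>+ (u :: real ^ 'n). ennreal (exp (- \<alpha> * ((real k - 1) / 2) * (norm u)\<^sup>2)) \<partial>lebesgue) ^ k)"
proof (intro conjI allI impI, goal_cases)
  case (1 \<rho>)
  then have "\<forall>t. 0 \<le> t \<longrightarrow> 0 < \<rho> t" "\<forall>s t. 0 \<le> s \<and> s \<le> t \<longrightarrow> \<rho> t \<le> \<rho> s"
    "\<forall>x :: nat \<Rightarrow> real ^ 'n. (\<forall>i<k. x i \<in> nonneg_orthant) \<longrightarrow> (\<Prod>i<k. f i (x i)) \<le> \<rho> (pair_inner_sum k x)"
    by simp_all
  then show ?case
    by (intro prod_nn_integral_le_radial[OF k nonneg meas uncond]) simp_all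
next
  case (2 \<alpha>)
  then show ?case
    by (intro prod_nn_integral_le_gaussian[OF k nonneg meas uncond]) simp_all
qed

end
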